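(* The logic $\mathrm{MHT}_f$ is decidable.
   Context: Write $[m,n)=\{i\in\mathbb{N}\mid m\le i<n\}$, $(m,n]=\{i\in\mathbb{N}\mid m<i\le n\}$. Metric formulas over a set of atoms $\mathcal{A}$: $\varphi::=p\mid\bot\mid\varphi_1\wedge\varphi_2\mid\varphi_1\vee\varphi_2\mid\varphi_1\to\varphi_2\mid\bullet_I\varphi\mid\varphi_1\mathsf{S}_I\varphi_2\mid\varphi_1\mathsf{T}_I\varphi_2\mid\circ_I\varphi\mid\varphi_1\mathsf{U}_I\varphi_2\mid\varphi_1\mathsf{R}_I\varphi_2$, $p\in\mathcal{A}$, $I=[m,n)$, $m\in\mathbb{N}$, $n\in\mathbb{N}\cup\{\omega\}$. A timed HT-trace of length $\lambda\in\mathbb{N}\cup\{\omega\}$ is $\mathbf{M}=(\langle\mathbf{H},\mathbf{T}\rangle,\tau)$ with $H_i\subseteq T_i\subseteq\mathcal{A}$ for $i\in[0,\lambda)$, $\tau:[0,\lambda)\to\mathbb{N}$, $\tau(0)=0$, $\tau(i)\le\tau(i+1)$. Satisfaction at $k\in[0,\lambda)$: $\bot$ never; $p$ iff $p\in H_k$; $\wedge,\vee$ usual; $\varphi\to\psi$ iff for both $\mathbf{M}'=\mathbf{M}$ and $\mathbf{M}'=(\langle\mathbf{T},\mathbf{T}\rangle,\tau)$, $\mathbf{M}',k\not\models\varphi$ or $\mathbf{M}',k\models\psi$; $\bullet_I\varphi$ iff $k>0$, $\mathbf{M},k-1\models\varphi$, $\tau(k)-\tau(k-1)\in I$; $\varphi\mathsf{S}_I\psi$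 iff for some $j\in[0,k]$ with $\tau(k)-\tau(j)\in I$, $\mathbf{M},j\models\psi$ and $\mathbf{M},i\models\varphi$ for all $i\in(j,k]$; $\varphi\mathsf{T}_I\psi$ iff for all $j\in[0,k]$ with $\tau(k)-\tau(j)\in I$, $\mathbf{M},j\models\psi$ or $\mathbf{M},i\models\varphi$ for some $i\in(j,k]$; $\circ_I\varphi$ iff $k+1<\lambda$, $\mathbf{M},k+1\models\varphi$, $\tau(k+1)-\tau(k)\in I$; $\varphi\mathsf{U}_I\psi$ iff for some $j\in[k,\lambda)$ with $\tau(j)-\tau(k)\in I$, $\mathbf{M},j\models\psi$ and $\mathbf{M},i\models\varphi$ for all $i\in[k,j)$; $\varphi\mathsf{R}_I\psi$ iff for all $j\in[k,\lambda)$ with $\tau(j)-\tau(k)\in I$, $\mathbf{M},j\models\psi$ or $\mathbf{M},i\models\varphi$ for some $i\in[k,j)$. $\mathrm{MHT}_f$ is the logic (set of tautologies, with its associated satisfiability notion) of metric formulas evaluated over timed HT-traces of finite length $\lambda\in\mathbb{N}$: $\varphi$ is $\mathrm{MHT}_f$-satisfiable if $\mathbf{M},0\models\varphi$ for some such trace, and an $\mathrm{MHT}_f$-tautology if $\mathbf{M},k\models\varphi$ for all such traces and all $k\in[0,\lambda)$. *)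

theory Defs
  imports Main "HOL-Library.Extended_Nat" "HOL-Library.Nat_Bijection"
begin

text \<open>An interval [m,n) is represented by the pair (m, n) with n :: enat
  (\<infinity> plays the role of \<omega>).\<close>

type_synonym interval = "nat \<times> enat"

datatype mform =
    Atom nat
  | Bot
  | And mform mform
  | Or mform mform
  | Impl mform mform
  | Prev interval mform
  | Since interval mform mform
  | Trigger interval mform mform
  | Next interval mform
  | Until interval mform mform
  | Release interval mform mform

definition in_int :: "interval \<Rightarrow> nat \<Rightarrow> bool" where
  "in_int I d \<longleftrightarrow> fst I \<le> d \<and> enat d < snd I"

text \<open>A timed HT-trace of finite length lam is given by H, T :: nat \<Rightarrow> nat set and
  tau :: nat \<Rightarrow> nat (only the values on [0,lam) matter).\<close>

definition timed_ht_trace :: "(nat \<Rightarrow> nat set) \<Rightarrow> (nat \<Rightarrow> nat set) \<Rightarrow> (nat \<Rightarrow> nat) \<Rightarrow> nat \<Rightarrow> bool" where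
  "timed_ht_trace H T tau lam \<longleftrightarrow>
     (\<forall>i<lam. H i \<subseteq> T i) \<and> tau 0 = 0 \<and> (\<forall>i. Suc i < lam \<longrightarrow> tau i \<le> tau (Suc i))"

primrec sat :: "(nat \<Rightarrow> nat set) \<Rightarrow> (nat \<Rightarrow> nat set) \<Rightarrow> (nat \<Rightarrow> nat) \<Rightarrow> nat \<Rightarrow> nat \<Rightarrow> mform \<Rightarrow> bool" where
  "sat H T tau lam k (Atom p) = (p \<in> H k)"
| "sat H T tau lam k Bot = False"
| "sat H T tau lam k (And a b) = (sat H T tau lam k a \<and> sat H T tau lam k b)"
| "sat H T tau lam k (Or a b) = (sat H T tau lam k a \<or> sat H T tau lam k b)"
| "sat H T tau lam k (Impl a b) =
     ((\<not> sat H T tau lam k a \<or> sat H T tau lam k b) \<and>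
      (\<not> sat T T tau lam k a \<or> sat T T tau lam k b))"
| "sat H T tau lam k (Prev I a) =
     (0 < k \<and> sat H T tau lam (k - 1) a \<and> in_int I (tau k - tau (k - 1)))"
| "sat H T tau lam k (Since I a b) =
     (\<exists>j\<le>k. in_int I (tau k - tau j) \<and> sat H T tau lam j b \<and>
        (\<forall>i. j < i \<and> i \<le> k \<longrightarrow> sat H T tau lam i a))"
| "sat H T tau lam k (Trigger I a b) =
     (\<forall>j\<le>k. in_int I (tau k - tau j) \<longrightarrow> sat H T tau lam j b \<or>
        (\<exists>i. j < i \<and> i \<le> k \<and> sat H T tau lam i a))"
| "sat H T tau lam k (Next I a) =
     (k + 1 < lam \<and> sat H T tau lam (k + 1) a \<and> in_int I (tau (k + 1) - tau k))"
| "sat H T tau lam k (Until I a b) =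
     (\<exists>j. k \<le> j \<and> j < lam \<and> in_int I (tau j - tau k) \<and> sat H T tau lam j b \<and>
        (\<forall>i. k \<le> i \<and> i < j \<longrightarrow> sat H T tau lam i a))"
| "sat H T tau lam k (Release I a b) =
     (\<forall>j. k \<le> j \<and> j < lam \<and> in_int I (tau j - tau k) \<longrightarrow> sat H T tau lam j b \<or>
        (\<exists>i. k \<le> i \<and> i < j \<and> sat H T tau lam i a))"

definition MHTf_tautology :: "mform \<Rightarrow> bool" where
  "MHTf_tautology \<phi> \<longleftrightarrow>
     (\<forall>H T tau lam. timed_ht_trace H T tau lam \<longrightarrow> (\<forall>k<lam. sat H T tau lam k \<phi>))"

definition MHTf_satisfiable :: "mform \<Rightarrow> bool" where
  "MHTf_satisfiable \<phi> \<longleftrightarrow>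
     (\<exists>H T tau lam. timed_ht_trace H T tau lam \<and> 0 < lam \<and> sat H T tau lam 0 \<phi>)"

definition enc_int :: "interval \<Rightarrow> nat" where
  "enc_int I = prod_encode (fst I, (case snd I of enat n \<Rightarrow> Suc n | \<infinity> \<Rightarrow> 0))"

primrec enc :: "mform \<Rightarrow> nat" where
  "enc (Atom p) = prod_encode (0, p)"
| "enc Bot = prod_encode (1, 0)"
| "enc (And a b) = prod_encode (2, prod_encode (enc a, enc b))"
| "enc (Or a b) = prod_encode (3, prod_encode (enc a, enc b))"
| "enc (Impl a b) = prod_encode (4, prod_encode (enc a, enc b))"
| "enc (Prev I a) = prod_encode (5, prod_encode (enc_int I, enc a))"
| "enc (Since I a b) = prod_encode (6, prod_encode (enc_int I, prod_encode (enc a, enc b)))"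
| "enc (Trigger I a b) = prod_encode (7, prod_encode (enc_int I, prod_encode (enc a, enc b)))"
| "enc (Next I a) = prod_encode (8, prod_encode (enc_int I, enc a))"
| "enc (Until I a b) = prod_encode (9, prod_encode (enc_int I, prod_encode (enc a, enc b)))"
| "enc (Release I a b) = prod_encode (10, prod_encode (enc_int I, prod_encode (enc a, enc b)))"

datatype recf =
    Zero
  | Succ
  | Proj nat
  | Comp recf "recf list"
  | PrimRec recf recf
  | Minimize recf

inductive eval :: "recf \<Rightarrow> nat list \<Rightarrow> nat \<Rightarrow> bool" where
  eval_Zero: "eval Zero xs 0"
| eval_Succ: "eval Succ [x] (Suc x)"
| eval_Proj: "i < length xs \<Longrightarrow> eval (Proj i) xs (xs ! i)"
| eval_Comp: "length ys = length gs \<Longrightarrow> (\<forall>i<length gs. eval (gs ! i) xs (ys ! i)) \<Longrightarrow>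
     eval f ys r \<Longrightarrow> eval (Comp f gs) xs r"
| eval_Pr0: "eval f xs r \<Longrightarrow> eval (PrimRec f g) (0 # xs) r"
| eval_PrS: "eval (PrimRec f g) (y # xs) r \<Longrightarrow> eval g (y # r # xs) s \<Longrightarrow>
     eval (PrimRec f g) (Suc y # xs) s"
| eval_Mn: "eval f (r # xs) 0 \<Longrightarrow> (\<forall>i<r. \<exists>v. eval f (i # xs) (Suc v)) \<Longrightarrow>
     eval (Minimize f) xs r"

definition decidable_mform :: "(mform \<Rightarrow> bool) \<Rightarrow> bool" where
  "decidable_mform P \<longleftrightarrow> (\<exists>f. \<forall>\<phi>. eval f [enc \<phi>] (if P \<phi> then 1 else 0))"

end

theory Submission
  imports Defs
begin

(* Decidability comes from a small model property and a bounded search.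

   A formula with code c = enc \<phi> only involves atoms and interval endpoints below c, so every
   time gap can be clamped to c. To bound the length, let the type of a position be the set of
   triples (\<psi>, d, world) such that the formula \<psi> with code at most c, its interval shifted by
   d \<le> c, holds there in that world; there are at most 2^(2(c+1)^2) types. If positions i < j have the same
   type and the evaluation point is not strictly between them, deleting (i, j] preserves
   satisfaction: an until or since crossing the gap is split at the glued position, and the two
   remainders agree because the types do. Hence (counter)models of length at most
   2 * 2^(2(c+1)^2) suffice.

   Such a trace is coded by numbers of bounded size, together with a table giving a truth value to
   every number z \<le> c at every position and world. A table that obeys the one-step semantic
   clauses agrees with satisfaction on codes of formulas (induction on formulas), and such a table
   always exists (well-founded recursion on codes). Searching all candidates is an arithmetic term
   with bounded quantifiers, and these terms compile to mu-recursive functions. *)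

section \<open>A small model property\<close>

lemma enc_bounds:
  "enc (Atom p) \<le> c \<Longrightarrow> p \<le> c"
  "enc (And a b) \<le> c \<Longrightarrow> enc a \<le> c \<and> enc b \<le> c"
  "enc (Or a b) \<le> c \<Longrightarrow> enc a \<le> c \<and> enc b \<le> c"
  "enc (Impl a b) \<le> c \<Longrightarrow> enc a \<le> c \<and> enc b \<le> c"
  "enc (Prev I a) \<le> c \<Longrightarrow> enc_int I \<le> c \<and> enc a \<le> c"
  "enc (Next I a) \<le> c \<Longrightarrow> enc_int I \<le> c \<and> enc a \<le> c"
  "enc (Since I a b) \<le> c \<Longrightarrow> enc_int I \<le> c \<and> enc a \<le> c \<and> enc b \<le> c"
  "enc (Trigger I a b) \<le> c \<Longrightarrow> enc_int I \<le> c \<and> enc a \<le> c \<and> enc b \<le> c"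
  "enc (Until I a b) \<le> c \<Longrightarrow> enc_int I \<le> c \<and> enc a \<le> c \<and> enc b \<le> c"
  "enc (Release I a b) \<le> c \<Longrightarrow> enc_int I \<le> c \<and> enc a \<le> c \<and> enc b \<le> c"
  by (simp_all, (meson le_prod_encode_1 le_prod_encode_2 order.trans)+)

lemma inj_enc: "inj enc"
proof (rule injI)
  show "enc a = enc b \<Longrightarrow> a = b" for a b
  proof (induction a arbitrary: b)
    case (Atom x) then show ?case by (cases b) auto
  next
    case Bot then show ?case by (cases b) auto
  qed (case_tac b; auto simp: enc_int_def split: enat.splits; metis enat.exhaust prod.collapse)+
qed

lemma finite_enc_le: "finite {\<psi>. enc \<psi> \<le> c}"
proof -
  have "{\<psi>. enc \<psi> \<le> c} = enc -` {..c}" by auto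
  then show ?thesis using finite_vimageI[OF _ inj_enc] by simp
qed

lemma card_enc_le: "card {\<psi>. enc \<psi> \<le> c} \<le> c + 1"
proof -
  have "card {\<psi>. enc \<psi> \<le> c} = card (enc ` {\<psi>. enc \<psi> \<le> c})"
    using inj_enc by (simp add: card_image inj_on_def)
  also have "\<dots> \<le> card {..c}" by (rule card_mono) auto
  finally show ?thesis by simp
qed

lemma in_int_saturated_cong:
  assumes "enc_int I \<le> c" and "d = d' \<or> c \<le> d \<and> c \<le> d'"
  shows "in_int I d \<longleftrightarrow> in_int I d'"
proof (cases I)
  case (Pair m n)
  have m: "m \<le> c"
    using assms(1) le_prod_encode_1[of m "case n of enat n \<Rightarrow> Suc n | \<infinity> \<Rightarrow> 0"]
    unfolding Pair enc_int_def by simp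
  show ?thesis
  proof (cases n)
    case (enat n')
    have "Suc n' \<le> c"
      using assms(1) le_prod_encode_2[of "Suc n'" m] unfolding Pair enat enc_int_def by simp
    then show ?thesis using m assms(2) unfolding Pair enat in_int_def by auto
  next
    case infinity
    then show ?thesis using m assms(2) unfolding Pair in_int_def by auto
  qed
qed

lemma timed_ht_trace_mono:
  assumes "timed_ht_trace H T tau lam" and "a \<le> b" and "b < lam"
  shows "tau a \<le> tau b"
  using assms(2,3)
proof (induction b)
  case (Suc b)
  show ?case
  proof (cases "a = Suc b")
    case False
    then have "tau a \<le> tau b" using Suc by simp
    also have "\<dots> \<le> tau (Suc b)" using assms(1) Suc.prems unfolding timed_ht_trace_def by simp
    finally show ?thesis .
  qed simp
qed simp

definition gaps_agree :: "nat \<Rightarrow> nat \<Rightarrow> (nat \<Rightarrow> nat) \<Rightarrow> (nat \<Rightarrow> nat) \<Rightarrow> bool" where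
  "gaps_agree c lam tau tau' \<longleftrightarrow> (\<forall>a b. a \<le> b \<longrightarrow> b < lam \<longrightarrow>
     tau b - tau a = tau' b - tau' a \<or> c \<le> tau b - tau a \<and> c \<le> tau' b - tau' a)"

lemma in_int_gaps_agree:
  assumes "gaps_agree c lam tau tau'" and "enc_int I \<le> c" and "a \<le> b" and "b < lam"
  shows "in_int I (tau b - tau a) \<longleftrightarrow> in_int I (tau' b - tau' a)"
  using assms(1,3,4) unfolding gaps_agree_def by (intro in_int_saturated_cong[OF assms(2)]) simp

lemma sat_cong_bounded:
  assumes T: "\<forall>p<lam. T p \<inter> {..c} = T' p \<inter> {..c}" and tau: "gaps_agree c lam tau tau'"
  shows "\<forall>p<lam. H p \<inter> {..c} = H' p \<inter> {..c} \<Longrightarrow> enc \<psi> \<le> c \<Longrightarrow> k < lam \<Longrightarrow>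
    sat H T tau lam k \<psi> \<longleftrightarrow> sat H' T' tau' lam k \<psi>"
proof (induction \<psi> arbitrary: H H' k)
  case (Atom p)
  have "p \<le> c" by (rule enc_bounds(1)[OF Atom.prems(2)])
  then show ?case using Atom.prems(1,3) by auto
next
  case (And a b)
  show ?case using And.IH[of H H' k] And.prems enc_bounds(2)[OF And.prems(2)] by simp
next
  case (Or a b)
  show ?case using Or.IH[of H H' k] Or.prems enc_bounds(3)[OF Or.prems(2)] by simp
next
  case (Impl a b)
  show ?case
    using Impl.IH[of H H' k] Impl.IH[of T T' k] Impl.prems T enc_bounds(4)[OF Impl.prems(2)] by simp
next
  case (Prev I a)
  show ?case
    using Prev.IH[of H H' "k - 1"] Prev.prems in_int_gaps_agree[OF tau, of I "k - 1" k]
      enc_bounds(5)[OF Prev.prems(2)]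
    by auto
next
  case (Next I a)
  show ?case
    using Next.IH[of H H' "k + 1"] Next.prems in_int_gaps_agree[OF tau, of I k "k + 1"]
      enc_bounds(6)[OF Next.prems(2)]
    by auto
next
  case (Since I a b)
  have "sat H T tau lam j a = sat H' T' tau' lam j a" "sat H T tau lam j b = sat H' T' tau' lam j b"
    "in_int I (tau k - tau j) = in_int I (tau' k - tau' j)" if "j \<le> k" for j
    using Since.IH[of H H' j] Since.prems in_int_gaps_agree[OF tau, of I j k] that
      enc_bounds(7)[OF Since.prems(2)] by auto
  then show ?case by (simp cong: conj_cong imp_cong)
next
  case (Trigger I a b)
  have "sat H T tau lam j a = sat H' T' tau' lam j a" "sat H T tau lam j b = sat H' T' tau' lam j b"
    "in_int I (tau k - tau j) = in_int I (tau' k - tau' j)" if "j \<le> k" for j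
    using Trigger.IH[of H H' j] Trigger.prems in_int_gaps_agree[OF tau, of I j k] that
      enc_bounds(8)[OF Trigger.prems(2)] by auto
  then show ?case by (simp cong: conj_cong imp_cong)
next
  case (Until I a b)
  have "sat H T tau lam j a = sat H' T' tau' lam j a" "sat H T tau lam j b = sat H' T' tau' lam j b"
    "k \<le> j \<Longrightarrow> in_int I (tau j - tau k) = in_int I (tau' j - tau' k)" if "j < lam" for j
    using Until.IH[of H H' j] Until.prems in_int_gaps_agree[OF tau, of I k j] that
      enc_bounds(9)[OF Until.prems(2)] by auto
  then show ?case by (simp cong: conj_cong imp_cong)
next
  case (Release I a b)
  have "sat H T tau lam j a = sat H' T' tau' lam j a" "sat H T tau lam j b = sat H' T' tau' lam j b"
    "k \<le> j \<Longrightarrow> in_int I (tau j - tau k) = in_int I (tau' j - tau' k)" if "j < lam" for j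
    using Release.IH[of H H' j] Release.prems in_int_gaps_agree[OF tau, of I k j] that
      enc_bounds(10)[OF Release.prems(2)] by auto
  then show ?case by (simp cong: conj_cong imp_cong)
qed simp

primrec clamp_time :: "nat \<Rightarrow> (nat \<Rightarrow> nat) \<Rightarrow> nat \<Rightarrow> nat" where
  "clamp_time c tau 0 = 0"
| "clamp_time c tau (Suc p) = clamp_time c tau p + min (tau (Suc p) - tau p) c"

lemma clamp_time_mono: "a \<le> b \<Longrightarrow> clamp_time c tau a \<le> clamp_time c tau b"
  by (induction b) (auto simp: le_Suc_eq intro: le_SucI order.trans)

lemma clamp_time_le: "clamp_time c tau p \<le> p * c"
  by (induction p) auto

lemma gaps_agree_clamp_time:
  assumes mono: "\<And>a b. a \<le> b \<Longrightarrow> b < lam \<Longrightarrow> tau a \<le> tau b"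
  shows "gaps_agree c lam tau (clamp_time c tau)"
  unfolding gaps_agree_def
proof (intro allI impI)
  fix a b :: nat
  assume "a \<le> b" "b < lam"
  then show "tau b - tau a = clamp_time c tau b - clamp_time c tau a \<or>
    c \<le> tau b - tau a \<and> c \<le> clamp_time c tau b - clamp_time c tau a"
  proof (induction b)
    case (Suc b)
    show ?case
    proof (cases "a = Suc b")
      case False
      then have "a \<le> b" using Suc.prems by simp
      moreover have "tau a \<le> tau b" "tau b \<le> tau (Suc b)" using \<open>a \<le> b\<close> Suc.prems mono by auto
      moreover note clamp_time_mono[OF \<open>a \<le> b\<close>, of c tau]
      ultimately show ?thesis using Suc by (auto simp: min_def)
    qed simp
  qed simp
qed

definition shift_int :: "nat \<Rightarrow> interval \<Rightarrow> interval" where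
  "shift_int d I = (fst I - d, snd I - enat d)"

lemma in_int_shift_int: "in_int (shift_int d I) e \<longleftrightarrow> in_int I (d + e)"
  by (cases "snd I") (auto simp: shift_int_def in_int_def)

fun shift_fmla :: "nat \<Rightarrow> mform \<Rightarrow> mform" where
  "shift_fmla d (Since I a b) = Since (shift_int d I) a b"
| "shift_fmla d (Trigger I a b) = Trigger (shift_int d I) a b"
| "shift_fmla d (Until I a b) = Until (shift_int d I) a b"
| "shift_fmla d (Release I a b) = Release (shift_int d I) a b"
| "shift_fmla d \<psi> = \<psi>"

lemma sat_shift_fmla_min:
  assumes "enc \<psi> \<le> c"
  shows "sat H T tau lam p (shift_fmla d \<psi>) \<longleftrightarrow> sat H T tau lam p (shift_fmla (min d c) \<psi>)"
proof -
  have shift: "in_int (shift_int d I) = in_int (shift_int (min d c) I)" if "enc_int I \<le> c" for I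
    unfolding in_int_shift_int by (rule ext, rule in_int_saturated_cong[OF that]) auto
  show ?thesis
  proof (cases \<psi>)
    case (Since I a b)
    then show ?thesis using enc_bounds(7)[OF assms[unfolded Since]] by (simp add: shift)
  next
    case (Trigger I a b)
    then show ?thesis using enc_bounds(8)[OF assms[unfolded Trigger]] by (simp add: shift)
  next
    case (Until I a b)
    then show ?thesis using enc_bounds(9)[OF assms[unfolded Until]] by (simp add: shift)
  next
    case (Release I a b)
    then show ?thesis using enc_bounds(10)[OF assms[unfolded Release]] by (simp add: shift)
  qed simp_all
qed

lemma shift_fmla_0 [simp]: "shift_fmla 0 \<psi> = \<psi>"
  by (cases \<psi>) (auto simp: shift_int_def zero_enat_def[symmetric])

text \<open>Until and since with the witness confined to \<open>[p, m)\<close> and \<open>[m, p]\<close> respectively;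
  the bound \<open>m\<close> is what allows splitting them at an intermediate position.\<close>

definition until_at :: "nat \<Rightarrow> (nat \<Rightarrow> nat) \<Rightarrow> interval \<Rightarrow> (nat \<Rightarrow> bool) \<Rightarrow> (nat \<Rightarrow> bool) \<Rightarrow> nat \<Rightarrow> bool" where
  "until_at m tau I A B p \<longleftrightarrow>
     (\<exists>w. p \<le> w \<and> w < m \<and> in_int I (tau w - tau p) \<and> B w \<and> (\<forall>x. p \<le> x \<and> x < w \<longrightarrow> A x))"

definition since_from :: "nat \<Rightarrow> (nat \<Rightarrow> nat) \<Rightarrow> interval \<Rightarrow> (nat \<Rightarrow> bool) \<Rightarrow> (nat \<Rightarrow> bool) \<Rightarrow> nat \<Rightarrow> bool" where
  "since_from m tau I A B p \<longleftrightarrow>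
     (\<exists>w. m \<le> w \<and> w \<le> p \<and> in_int I (tau p - tau w) \<and> B w \<and> (\<forall>x. w < x \<and> x \<le> p \<longrightarrow> A x))"

lemma sat_temporal_iff:
  "sat H T tau lam k (Since I a b) \<longleftrightarrow>
     since_from 0 tau I (\<lambda>q. sat H T tau lam q a) (\<lambda>q. sat H T tau lam q b) k"
  "sat H T tau lam k (Trigger I a b) \<longleftrightarrow>
     \<not> since_from 0 tau I (\<lambda>q. \<not> sat H T tau lam q a) (\<lambda>q. \<not> sat H T tau lam q b) k"
  "sat H T tau lam k (Until I a b) \<longleftrightarrow>
     until_at lam tau I (\<lambda>q. sat H T tau lam q a) (\<lambda>q. sat H T tau lam q b) k"
  "sat H T tau lam k (Release I a b) \<longleftrightarrow>
     \<not> until_at lam tau I (\<lambda>q. \<not> sat H T tau lam q a) (\<lambda>q. \<not> sat H T tau lam q b) k"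
  by (auto simp: since_from_def until_at_def)

lemma until_at_reindex:
  assumes "\<And>x. p \<le> x \<Longrightarrow> x < m \<Longrightarrow>
    A' x = A (x + d) \<and> B' x = B (x + d) \<and> tau' x - tau' p = tau (x + d) - tau (p + d)"
  shows "until_at m tau' I A' B' p \<longleftrightarrow> until_at (m + d) tau I A B (p + d)"
proof
  assume "until_at m tau' I A' B' p"
  then obtain w where w: "p \<le> w" "w < m" "in_int I (tau' w - tau' p)" "B' w"
    and A: "\<And>x. p \<le> x \<Longrightarrow> x < w \<Longrightarrow> A' x" unfolding until_at_def by blast
  have "A x" if "p + d \<le> x" "x < w + d" for x
    using A[of "x - d"] assms[of "x - d"] that w(2) by simp
  then show "until_at (m + d) tau I A B (p + d)"
    unfolding until_at_def using w assms[of w] by (intro exI[of _ "w + d"]) auto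
next
  assume "until_at (m + d) tau I A B (p + d)"
  then obtain w where w: "p + d \<le> w" "w < m + d" "in_int I (tau w - tau (p + d))" "B w"
    and A: "\<And>x. p + d \<le> x \<Longrightarrow> x < w \<Longrightarrow> A x" unfolding until_at_def by blast
  have "A' x" if "p \<le> x" "x < w - d" for x
    using A[of "x + d"] assms[of x] that w(2) by simp
  then show "until_at m tau' I A' B' p"
    unfolding until_at_def using w assms[of "w - d"] by (intro exI[of _ "w - d"]) auto
qed

lemma since_from_reindex:
  assumes "\<And>x. m \<le> x \<Longrightarrow> x \<le> p \<Longrightarrow>
    A' x = A (x + d) \<and> B' x = B (x + d) \<and> tau' p - tau' x = tau (p + d) - tau (x + d)"
  shows "since_from m tau' I A' B' p \<longleftrightarrow> since_from (m + d) tau I A B (p + d)"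
proof
  assume "since_from m tau' I A' B' p"
  then obtain w where w: "m \<le> w" "w \<le> p" "in_int I (tau' p - tau' w)" "B' w"
    and A: "\<And>x. w < x \<Longrightarrow> x \<le> p \<Longrightarrow> A' x" unfolding since_from_def by blast
  have "A x" if "w + d < x" "x \<le> p + d" for x
    using A[of "x - d"] assms[of "x - d"] that w(1) by simp
  then show "since_from (m + d) tau I A B (p + d)"
    unfolding since_from_def using w assms[of w] by (intro exI[of _ "w + d"]) auto
next
  assume "since_from (m + d) tau I A B (p + d)"
  then obtain w where w: "m + d \<le> w" "w \<le> p + d" "in_int I (tau (p + d) - tau w)" "B w"
    and A: "\<And>x. w < x \<Longrightarrow> x \<le> p + d \<Longrightarrow> A x" unfolding since_from_def by blast
  have "A' x" if "w - d < x" "x \<le> p" for x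
    using A[of "x + d"] assms[of x] that w(1) by simp
  then show "since_from m tau' I A' B' p"
    unfolding since_from_def using w assms[of "w - d"] by (intro exI[of _ "w - d"]) auto
qed

lemma until_at_split:
  assumes "p \<le> m" and "m < lam" and mono: "\<And>a b. a \<le> b \<Longrightarrow> b < lam \<Longrightarrow> tau a \<le> tau b"
  shows "until_at lam tau I A B p \<longleftrightarrow> until_at m tau I A B p \<or>
    (\<forall>x. p \<le> x \<and> x < m \<longrightarrow> A x) \<and> until_at lam tau (shift_int (tau m - tau p) I) A B m"
proof -
  have "until_at lam tau I A B p \<longleftrightarrow> until_at m tau I A B p \<or>
      (\<exists>w. m \<le> w \<and> w < lam \<and> in_int I (tau w - tau p) \<and> B w \<and> (\<forall>x. p \<le> x \<and> x < w \<longrightarrow> A x))"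
  proof
    assume "until_at lam tau I A B p"
    then obtain w where "p \<le> w" "w < lam" "in_int I (tau w - tau p)" "B w" "\<forall>x. p \<le> x \<and> x < w \<longrightarrow> A x"
      unfolding until_at_def by blast
    then show "until_at m tau I A B p \<or>
      (\<exists>w. m \<le> w \<and> w < lam \<and> in_int I (tau w - tau p) \<and> B w \<and> (\<forall>x. p \<le> x \<and> x < w \<longrightarrow> A x))"
      unfolding until_at_def by (cases "w < m") (blast, blast dest: leI)
  qed (unfold until_at_def, use assms(1,2) in \<open>blast intro: le_trans less_trans\<close>)
  also have "\<dots> \<longleftrightarrow> until_at m tau I A B p \<or>
      (\<forall>x. p \<le> x \<and> x < m \<longrightarrow> A x) \<and> until_at lam tau (shift_int (tau m - tau p) I) A B m"
  proof -
    have "(m \<le> w \<and> w < lam \<and> in_int I (tau w - tau p) \<and> B w \<and> (\<forall>x. p \<le> x \<and> x < w \<longrightarrow> A x)) \<longleftrightarrow>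
      (\<forall>x. p \<le> x \<and> x < m \<longrightarrow> A x) \<and> (m \<le> w \<and> w < lam \<and>
        in_int I (tau m - tau p + (tau w - tau m)) \<and> B w \<and> (\<forall>x. m \<le> x \<and> x < w \<longrightarrow> A x))" for w
    proof (cases "m \<le> w \<and> w < lam")
      case True
      then have "tau w - tau p = tau m - tau p + (tau w - tau m)"
        using mono[of p m] mono[of m w] assms(1,2) by simp
      moreover have "(\<forall>x. p \<le> x \<and> x < w \<longrightarrow> A x) \<longleftrightarrow>
          (\<forall>x. p \<le> x \<and> x < m \<longrightarrow> A x) \<and> (\<forall>x. m \<le> x \<and> x < w \<longrightarrow> A x)"
        using assms(1) True by (meson le_trans not_le order.strict_trans2)
      ultimately show ?thesis by (simp only:) blast
    qed auto
    then show ?thesis unfolding until_at_def in_int_shift_int by simp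
  qed
  finally show ?thesis .
qed

lemma since_from_split:
  assumes "m < p" and mono: "\<And>a b. a \<le> b \<Longrightarrow> b \<le> p \<Longrightarrow> tau a \<le> tau b"
  shows "since_from 0 tau I A B p \<longleftrightarrow> since_from (Suc m) tau I A B p \<or>
    (\<forall>x. m < x \<and> x \<le> p \<longrightarrow> A x) \<and> since_from 0 tau (shift_int (tau p - tau m) I) A B m"
proof -
  have "since_from 0 tau I A B p \<longleftrightarrow> since_from (Suc m) tau I A B p \<or>
      (\<exists>w. w \<le> m \<and> in_int I (tau p - tau w) \<and> B w \<and> (\<forall>x. w < x \<and> x \<le> p \<longrightarrow> A x))"
  proof
    assume "since_from 0 tau I A B p"
    then obtain w where w: "w \<le> p" "in_int I (tau p - tau w)" "B w" "\<forall>x. w < x \<and> x \<le> p \<longrightarrow> A x"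
      unfolding since_from_def by blast
    show "since_from (Suc m) tau I A B p \<or>
      (\<exists>w. w \<le> m \<and> in_int I (tau p - tau w) \<and> B w \<and> (\<forall>x. w < x \<and> x \<le> p \<longrightarrow> A x))"
    proof (cases "m < w")
      case True
      then have "since_from (Suc m) tau I A B p"
        unfolding since_from_def using w by (intro exI[of _ w]) auto
      then show ?thesis ..
    next
      case False
      then show ?thesis using w by (metis not_less)
    qed
  next
    assume "since_from (Suc m) tau I A B p \<or>
      (\<exists>w. w \<le> m \<and> in_int I (tau p - tau w) \<and> B w \<and> (\<forall>x. w < x \<and> x \<le> p \<longrightarrow> A x))"
    then show "since_from 0 tau I A B p"
      unfolding since_from_def using assms(1) by (meson le0 le_trans less_imp_le)
  qed
  also have "\<dots> \<longleftrightarrow> since_from (Suc m) tau I A B p \<or>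
      (\<forall>x. m < x \<and> x \<le> p \<longrightarrow> A x) \<and> since_from 0 tau (shift_int (tau p - tau m) I) A B m"
  proof -
    have "(w \<le> m \<and> in_int I (tau p - tau w) \<and> B w \<and> (\<forall>x. w < x \<and> x \<le> p \<longrightarrow> A x)) \<longleftrightarrow>
      (\<forall>x. m < x \<and> x \<le> p \<longrightarrow> A x) \<and> (0 \<le> w \<and> w \<le> m \<and>
        in_int I (tau p - tau m + (tau m - tau w)) \<and> B w \<and> (\<forall>x. w < x \<and> x \<le> m \<longrightarrow> A x))" for w
    proof (cases "w \<le> m")
      case True
      then have "tau p - tau w = tau p - tau m + (tau m - tau w)"
        using mono[of w m] mono[of m p] assms(1) by simp
      moreover have "(\<forall>x. w < x \<and> x \<le> p \<longrightarrow> A x) \<longleftrightarrow>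
          (\<forall>x. m < x \<and> x \<le> p \<longrightarrow> A x) \<and> (\<forall>x. w < x \<and> x \<le> m \<longrightarrow> A x)"
        using assms(1) True by (meson le_less_trans not_le order.trans less_imp_le)
      ultimately show ?thesis by (simp only:) blast
    qed auto
    then show ?thesis unfolding since_from_def in_int_shift_int by simp
  qed
  finally show ?thesis .
qed

text \<open>Deleting the positions in \<open>(i, j]\<close>: later timestamps move back by \<open>tau j - tau i\<close>, so
  that the step after \<open>i\<close> takes as long as the step after \<open>j\<close> did.\<close>

locale segment_cut =
  fixes lam i j :: nat and tau :: "nat \<Rightarrow> nat"
  assumes i_less_j: "i < j" and j_less_lam: "j < lam"
    and mono: "\<And>a b. a \<le> b \<Longrightarrow> b < lam \<Longrightarrow> tau a \<le> tau b"
begin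

definition "cut_len = lam - (j - i)"
definition "cut_pos q = (if q \<le> i then q else q + (j - i))"
definition "cut_time q = (if q \<le> i then tau q else tau (q + (j - i)) - (tau j - tau i))"

lemma less_cut_len_iff: "q < cut_len \<longleftrightarrow> q + (j - i) < lam"
  using i_less_j j_less_lam by (auto simp: cut_len_def)

lemma i_less_cut_len: "i < cut_len"
  using i_less_j j_less_lam by (simp add: less_cut_len_iff)

lemma cut_pos_less: "q < cut_len \<Longrightarrow> cut_pos q < lam"
  using i_less_j j_less_lam by (auto simp: cut_pos_def less_cut_len_iff)

lemma cut_time_low: "q \<le> i \<Longrightarrow> cut_time q = tau q"
  by (simp add: cut_time_def)

lemma tau_i_le_j: "tau i \<le> tau j"
  using i_less_j j_less_lam by (auto intro: mono)

lemma cut_time_high: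
  assumes "i \<le> q" and "q < cut_len"
  shows "cut_time q = tau (q + (j - i)) - (tau j - tau i)"
  using assms tau_i_le_j i_less_j by (cases "q = i") (auto simp: cut_time_def)

lemma cut_time_gap_high:
  assumes "i \<le> x" and "x \<le> y" and "y < cut_len"
  shows "cut_time y - cut_time x = tau (y + (j - i)) - tau (x + (j - i))"
proof -
  have "tau j \<le> tau (x + (j - i))" "tau (x + (j - i)) \<le> tau (y + (j - i))"
    using assms i_less_j by (auto intro!: mono simp: less_cut_len_iff)
  then show ?thesis using assms tau_i_le_j by (simp add: cut_time_high)
qed

lemma cut_time_mono:
  assumes "a \<le> b" and "b < cut_len"
  shows "cut_time a \<le> cut_time b"
proof -
  have "tau i \<le> tau j" "i < b \<Longrightarrow> tau j \<le> tau (b + (j - i))"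
    "i < a \<Longrightarrow> tau (a + (j - i)) \<le> tau (b + (j - i))" "a \<le> i \<Longrightarrow> tau a \<le> tau i"
    "b \<le> i \<Longrightarrow> tau a \<le> tau b"
    using assms i_less_j j_less_lam by (auto intro!: mono simp: less_cut_len_iff)
  then show ?thesis using assms(1) by (auto simp: cut_time_def)
qed

lemma cut_len_less: "cut_len < lam"
  using i_less_j j_less_lam by (simp add: cut_len_def)

lemma cut_len_plus: "cut_len + (j - i) = lam"
  using i_less_j j_less_lam by (simp add: cut_len_def)

lemma cut_pos_low: "x \<le> i \<Longrightarrow> cut_pos x = x" and cut_pos_high: "i < x \<Longrightarrow> cut_pos x = x + (j - i)"
  by (simp_all add: cut_pos_def)

lemma until_cut:
  assumes A: "\<And>x. x < cut_len \<Longrightarrow> A' x = A (cut_pos x)"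
    and B: "\<And>x. x < cut_len \<Longrightarrow> B' x = B (cut_pos x)"
    and ij: "A i = A j" "B i = B j"
    and same_type: "\<And>D. until_at lam tau (shift_int D I) A B i = until_at lam tau (shift_int D I) A B j"
    and q: "q < cut_len"
  shows "until_at cut_len cut_time I A' B' q = until_at lam tau I A B (cut_pos q)"
proof (cases "i < q")
  case True
  have "until_at cut_len cut_time I A' B' q = until_at (cut_len + (j - i)) tau I A B (q + (j - i))"
    by (rule until_at_reindex) (use True A B cut_time_gap_high in \<open>auto simp: cut_pos_high\<close>)
  then show ?thesis using True by (simp add: cut_len_plus cut_pos_high)
next
  case False
  let ?D = "tau i - tau q"
  have D: "cut_time i - cut_time q = ?D" using False by (simp add: cut_time_low)
  have "until_at i cut_time I A' B' q = until_at (i + 0) tau I A B (q + 0)"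
    by (rule until_at_reindex) (use i_less_cut_len A B in \<open>auto simp: cut_pos_low cut_time_low\<close>)
  then have low: "until_at i cut_time I A' B' q = until_at i tau I A B q" by simp
  have A_low: "(\<forall>x. q \<le> x \<and> x < i \<longrightarrow> A' x) \<longleftrightarrow> (\<forall>x. q \<le> x \<and> x < i \<longrightarrow> A x)"
    using A i_less_cut_len by (auto simp: cut_pos_low)
  have "until_at cut_len cut_time (shift_int ?D I) A' B' i =
      until_at (cut_len + (j - i)) tau (shift_int ?D I) A B (i + (j - i))"
  proof (rule until_at_reindex)
    fix x assume "i \<le> x" "x < cut_len"
    then show "A' x = A (x + (j - i)) \<and> B' x = B (x + (j - i)) \<and>
      cut_time x - cut_time i = tau (x + (j - i)) - tau (i + (j - i))"
      using A[of x] B[of x] ij i_less_j cut_time_gap_high[of i x]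
      by (cases "x = i") (auto simp: cut_pos_low cut_pos_high)
  qed
  then have high: "until_at cut_len cut_time (shift_int ?D I) A' B' i =
      until_at lam tau (shift_int ?D I) A B i"
    using same_type i_less_j by (simp add: cut_len_plus)
  have "until_at cut_len cut_time I A' B' q \<longleftrightarrow> until_at i cut_time I A' B' q \<or>
      (\<forall>x. q \<le> x \<and> x < i \<longrightarrow> A' x) \<and> until_at cut_len cut_time (shift_int ?D I) A' B' i"
    using False i_less_cut_len cut_time_mono by (subst until_at_split[of q i]) (simp_all add: D)
  also have "\<dots> \<longleftrightarrow> until_at lam tau I A B q"
    using False i_less_j j_less_lam mono
    by (subst until_at_split[of q i]) (simp_all add: low A_low high)
  finally show ?thesis using False by (simp add: cut_pos_low)
qed

lemma all_between_cut:
  assumes A: "\<And>x. x < cut_len \<Longrightarrow> A' x = A (cut_pos x)" and q: "q < cut_len"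
  shows "(\<forall>x. i < x \<and> x \<le> q \<longrightarrow> A' x) \<longleftrightarrow> (\<forall>x. j < x \<and> x \<le> q + (j - i) \<longrightarrow> A x)"
proof -
  have shift: "A' x = A (x + (j - i))" if "i < x" "x \<le> q" for x
    using A[of x] that q by (simp add: cut_pos_high)
  show ?thesis
  proof (intro iffI allI impI)
    fix x assume "\<forall>x. i < x \<and> x \<le> q \<longrightarrow> A' x" and "j < x \<and> x \<le> q + (j - i)"
    moreover from \<open>j < x \<and> x \<le> q + (j - i)\<close>
    have "i < x - (j - i)" "x - (j - i) \<le> q" "x - (j - i) + (j - i) = x"
      using i_less_j by auto
    ultimately show "A x" using shift[of "x - (j - i)"] by simp
  next
    fix x assume "\<forall>x. j < x \<and> x \<le> q + (j - i) \<longrightarrow> A x" and "i < x \<and> x \<le> q"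
    moreover from \<open>i < x \<and> x \<le> q\<close> have "j < x + (j - i)" "x + (j - i) \<le> q + (j - i)"
      using i_less_j by auto
    ultimately show "A' x" using shift[of x] by simp
  qed
qed

lemma since_cut:
  assumes A: "\<And>x. x < cut_len \<Longrightarrow> A' x = A (cut_pos x)"
    and B: "\<And>x. x < cut_len \<Longrightarrow> B' x = B (cut_pos x)"
    and same_type: "\<And>D. since_from 0 tau (shift_int D I) A B i = since_from 0 tau (shift_int D I) A B j"
    and q: "q < cut_len"
  shows "since_from 0 cut_time I A' B' q = since_from 0 tau I A B (cut_pos q)"
proof (cases "i < q")
  case False
  have "since_from 0 cut_time I A' B' q = since_from (0 + 0) tau I A B (q + 0)"
    by (rule since_from_reindex) (use False q A B in \<open>auto simp: cut_pos_low cut_time_low\<close>)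
  then show ?thesis using False by (simp add: cut_pos_low)
next
  case True
  let ?d = "j - i" and ?D = "tau (q + (j - i)) - tau j"
  have D: "cut_time q - cut_time i = ?D"
    using True q cut_time_gap_high[of i q] i_less_j by simp
  have "since_from (Suc i) cut_time I A' B' q = since_from (Suc i + ?d) tau I A B (q + ?d)"
    by (rule since_from_reindex) (use q A B cut_time_gap_high in \<open>auto simp: cut_pos_high\<close>)
  then have win: "since_from (Suc i) cut_time I A' B' q = since_from (Suc j) tau I A B (q + ?d)"
    using i_less_j by (simp add: Suc_diff_le)
  have A_win: "(\<forall>x. i < x \<and> x \<le> q \<longrightarrow> A' x) \<longleftrightarrow> (\<forall>x. j < x \<and> x \<le> q + ?d \<longrightarrow> A x)"
    using A q by (rule all_between_cut)
  have "since_from 0 cut_time (shift_int ?D I) A' B' i =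
      since_from (0 + 0) tau (shift_int ?D I) A B (i + 0)"
    by (rule since_from_reindex) (use i_less_cut_len A B in \<open>auto simp: cut_pos_low cut_time_low\<close>)
  then have prefix:
      "since_from 0 cut_time (shift_int ?D I) A' B' i = since_from 0 tau (shift_int ?D I) A B j"
    using same_type by simp
  have "since_from 0 cut_time I A' B' q \<longleftrightarrow> since_from (Suc i) cut_time I A' B' q \<or>
      (\<forall>x. i < x \<and> x \<le> q \<longrightarrow> A' x) \<and> since_from 0 cut_time (shift_int ?D I) A' B' i"
    using True q cut_time_mono by (subst since_from_split[of i q]) (simp_all add: D)
  also have "\<dots> \<longleftrightarrow> since_from (Suc j) tau I A B (q + ?d) \<or>
      (\<forall>x. j < x \<and> x \<le> q + ?d \<longrightarrow> A x) \<and> since_from 0 tau (shift_int ?D I) A B j"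
    by (simp only: win A_win prefix)
  also have "\<dots> \<longleftrightarrow> since_from 0 tau I A B (q + ?d)"
  proof (rule since_from_split[symmetric])
    show "j < q + ?d" using True i_less_j by simp
    show "tau a \<le> tau b" if "a \<le> b" "b \<le> q + ?d" for a b
      using that q by (intro mono) (simp_all add: less_cut_len_iff)
  qed
  finally show ?thesis using True by (simp add: cut_pos_high)
qed

text \<open>Position \<open>i\<close> of the shortened trace stands for both \<open>i\<close> and \<open>j\<close>; seen from its
  successor it is \<open>j\<close>.\<close>

definition "cut_pos_right q = (if q = i then j else cut_pos q)"

lemma cut_pos_Suc: "cut_pos (Suc q) = Suc (cut_pos_right q)"
  using i_less_j by (auto simp: cut_pos_def cut_pos_right_def)

lemma cut_time_Suc:
  assumes "Suc q < cut_len"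
  shows "cut_time (Suc q) - cut_time q = tau (Suc (cut_pos_right q)) - tau (cut_pos_right q)"
proof (cases "q < i")
  case True
  then show ?thesis by (simp add: cut_time_low cut_pos_right_def cut_pos_low)
next
  case False
  then show ?thesis
    using cut_time_gap_high[of q "Suc q"] assms i_less_j
    by (auto simp: cut_pos_right_def cut_pos_def)
qed

lemma less_cut_len_iff_cut_pos: "q < cut_len \<longleftrightarrow> cut_pos q < lam"
  using i_less_cut_len j_less_lam by (auto simp: cut_pos_def less_cut_len_iff)

lemma sat_cut:
  assumes same_type: "\<And>\<psi> d H'. enc \<psi> \<le> c \<Longrightarrow> H' \<in> {H, T} \<Longrightarrow>
    sat H' T tau lam i (shift_fmla d \<psi>) \<longleftrightarrow> sat H' T tau lam j (shift_fmla d \<psi>)"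
  shows "enc \<psi> \<le> c \<Longrightarrow> H' \<in> {H, T} \<Longrightarrow> q < cut_len \<Longrightarrow>
    sat (\<lambda>p. H' (cut_pos p)) (\<lambda>p. T (cut_pos p)) cut_time cut_len q \<psi> \<longleftrightarrow> sat H' T tau lam (cut_pos q) \<psi>"
proof (induction \<psi> arbitrary: H' q)
  case (And a b)
  then show ?case using enc_bounds(2)[OF And.prems(1)] by simp
next
  case (Or a b)
  then show ?case using enc_bounds(3)[OF Or.prems(1)] by simp
next
  case (Impl a b)
  then show ?case using Impl.IH[of T q] enc_bounds(4)[OF Impl.prems(1)] by simp
next
  case (Prev I a)
  have a: "enc a \<le> c" using enc_bounds(5)[OF Prev.prems(1)] by simp
  show ?case
  proof (cases q)
    case (Suc q')
    have "sat (\<lambda>p. H' (cut_pos p)) (\<lambda>p. T (cut_pos p)) cut_time cut_len q' a \<longleftrightarrow>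
        sat H' T tau lam (cut_pos_right q') a"
      using Prev.IH[OF a Prev.prems(2), of q'] Prev.prems(3) same_type[OF a Prev.prems(2), of 0] Suc
      by (auto simp: cut_pos_right_def cut_pos_low)
    then show ?thesis using Suc Prev.prems(3) cut_time_Suc[of q'] by (simp add: cut_pos_Suc)
  qed (simp add: cut_pos_low)
next
  case (Next I a)
  have a: "enc a \<le> c" using enc_bounds(6)[OF Next.prems(1)] by simp
  have "sat (\<lambda>p. H' (cut_pos p)) (\<lambda>p. T (cut_pos p)) cut_time cut_len q (Next I a) \<longleftrightarrow>
      sat H' T tau lam (cut_pos_right q) (Next I a)"
    using Next.IH[OF a Next.prems(2), of "Suc q"] cut_time_Suc[of q]
      less_cut_len_iff_cut_pos[of "Suc q"] by (auto simp: cut_pos_Suc)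
  also have "\<dots> \<longleftrightarrow> sat H' T tau lam (cut_pos q) (Next I a)"
    using same_type[OF Next.prems(1,2), of 0] by (simp add: cut_pos_right_def cut_pos_low)
  finally show ?case .
next
  case (Since I a b)
  have ab: "enc a \<le> c" "enc b \<le> c" using enc_bounds(7)[OF Since.prems(1)] by simp_all
  show ?case unfolding sat_temporal_iff
  proof (rule since_cut, goal_cases)
    case (3 D) show ?case
      using same_type[OF Since.prems(1,2), of D] by (simp only: shift_fmla.simps sat_temporal_iff)
  qed (use Since.IH ab Since.prems(2,3) in auto)
next
  case (Trigger I a b)
  have ab: "enc a \<le> c" "enc b \<le> c" using enc_bounds(8)[OF Trigger.prems(1)] by simp_all
  show ?case unfolding sat_temporal_iff
  proof (rule arg_cong[where f = Not], rule since_cut, goal_cases)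
    case (3 D) show ?case
      using same_type[OF Trigger.prems(1,2), of D]
      by (simp only: shift_fmla.simps sat_temporal_iff not_not simp_thms)
  qed (use Trigger.IH ab Trigger.prems(2,3) in auto)
next
  case (Until I a b)
  have ab: "enc a \<le> c" "enc b \<le> c" using enc_bounds(9)[OF Until.prems(1)] by simp_all
  show ?case unfolding sat_temporal_iff
  proof (rule until_cut, goal_cases)
    case (5 D) show ?case
      using same_type[OF Until.prems(1,2), of D] by (simp only: shift_fmla.simps sat_temporal_iff)
  qed (use Until.IH ab Until.prems(2,3) same_type[OF _ Until.prems(2), of _ 0] in auto)
next
  case (Release I a b)
  have ab: "enc a \<le> c" "enc b \<le> c" using enc_bounds(10)[OF Release.prems(1)] by simp_all
  show ?case unfolding sat_temporal_iff
  proof (rule arg_cong[where f = Not], rule until_cut, goal_cases)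
    case (5 D) show ?case
      using same_type[OF Release.prems(1,2), of D]
      by (simp only: shift_fmla.simps sat_temporal_iff not_not simp_thms)
  qed (use Release.IH ab Release.prems(2,3) same_type[OF _ Release.prems(2), of _ 0] in auto)
qed (auto simp: cut_pos_low)

lemma timed_ht_trace_cut:
  assumes "timed_ht_trace H T tau lam"
  shows "timed_ht_trace (\<lambda>p. H (cut_pos p)) (\<lambda>p. T (cut_pos p)) cut_time cut_len"
  using assms cut_pos_less cut_time_mono unfolding timed_ht_trace_def
  by (auto simp: cut_time_low)

lemma sat_cut_at:
  assumes same_type: "\<And>\<psi> d H'. enc \<psi> \<le> c \<Longrightarrow> H' \<in> {H, T} \<Longrightarrow>
    sat H' T tau lam i (shift_fmla d \<psi>) \<longleftrightarrow> sat H' T tau lam j (shift_fmla d \<psi>)"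
    and "enc \<phi> \<le> c" and "k < lam" and "k \<le> i \<or> j \<le> k"
  obtains k' where "k' < cut_len" and "k = 0 \<Longrightarrow> k' = 0"
    and "sat (\<lambda>p. H (cut_pos p)) (\<lambda>p. T (cut_pos p)) cut_time cut_len k' \<phi> \<longleftrightarrow> sat H T tau lam k \<phi>"
proof -
  note cut = sat_cut[where c = c and H = H and T = T, OF same_type assms(2), of H, simplified]
  consider "k \<le> i" | "k = j" | "j < k" using assms(4) by linarith
  then show ?thesis
  proof cases
    case 1
    then show ?thesis using that[of k] cut[of k] i_less_cut_len by (simp add: cut_pos_low)
  next
    case 2
    then show ?thesis using that[of i] cut[of i] i_less_cut_len i_less_j same_type[OF assms(2), of H 0]
      by (simp add: cut_pos_low)
  next
    case 3
    then have "k - (j - i) < cut_len" "i < k - (j - i)" "cut_pos (k - (j - i)) = k"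
      using assms(3) i_less_j by (auto simp: less_cut_len_iff cut_pos_high)
    then show ?thesis using that[of "k - (j - i)"] cut[of "k - (j - i)"] 3 by simp
  qed
qed

end

definition fmla_type :: "nat \<Rightarrow> (nat \<Rightarrow> nat set) \<Rightarrow> (nat \<Rightarrow> nat set) \<Rightarrow> (nat \<Rightarrow> nat) \<Rightarrow> nat \<Rightarrow> nat \<Rightarrow>
    (mform \<times> nat \<times> bool) set" where
  "fmla_type c H T tau lam p = {(\<psi>, d, here). enc \<psi> \<le> c \<and> d \<le> c \<and>
     sat (if here then H else T) T tau lam p (shift_fmla d \<psi>)}"

definition type_bound :: "nat \<Rightarrow> nat" where
  "type_bound c = 2 ^ (2 * (c + 1) * (c + 1))"

lemma fmla_type_subset: "fmla_type c H T tau lam p \<subseteq> {\<psi>. enc \<psi> \<le> c} \<times> {..c} \<times> UNIV"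
  by (auto simp: fmla_type_def)

lemma card_fmla_type_space: "2 ^ card ({\<psi>. enc \<psi> \<le> c} \<times> {..c} \<times> (UNIV :: bool set)) \<le> type_bound c"
proof -
  have "card ({\<psi>. enc \<psi> \<le> c} \<times> {..c} \<times> (UNIV :: bool set)) = card {\<psi>. enc \<psi> \<le> c} * (c + 1) * 2"
    by (simp add: card_cartesian_product)
  also have "\<dots> \<le> (c + 1) * (c + 1) * 2"
    using card_enc_le[of c] by (intro mult_le_mono) auto
  finally have "card ({\<psi>. enc \<psi> \<le> c} \<times> {..c} \<times> (UNIV :: bool set)) \<le> (c + 1) * (c + 1) * 2" .
  then show ?thesis unfolding type_bound_def by (intro power_increasing) (auto simp: algebra_simps)
qed

lemma pigeonhole_subsets:
  fixes P :: "'a :: linorder set"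
  assumes "finite U" and "\<And>p. p \<in> P \<Longrightarrow> f p \<subseteq> U" and "2 ^ card U < card P"
  obtains i j where "i \<in> P" "j \<in> P" "i < j" "f i = f j"
proof -
  have "card (f ` P) \<le> card (Pow U)" using assms(1,2) by (intro card_mono) auto
  then have "\<not> inj_on f P" using assms(1,3) by (intro pigeonhole) (simp add: card_Pow)
  then obtain i j where "i \<in> P" "j \<in> P" "i \<noteq> j" "f i = f j" unfolding inj_on_def by blast
  then show ?thesis using that by (cases "i < j") (auto simp: not_less_iff_gr_or_eq)
qed

lemma same_fmla_type_sat:
  assumes "fmla_type c H T tau lam i = fmla_type c H T tau lam j" and "enc \<psi> \<le> c" and "H' \<in> {H, T}"
  shows "sat H' T tau lam i (shift_fmla d \<psi>) \<longleftrightarrow> sat H' T tau lam j (shift_fmla d \<psi>)"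
proof -
  have "(\<psi>, min d c, H' = H) \<in> fmla_type c H T tau lam i \<longleftrightarrow>
      (\<psi>, min d c, H' = H) \<in> fmla_type c H T tau lam j"
    using assms(1) by simp
  then show ?thesis
    using assms(2,3) sat_shift_fmla_min[OF assms(2)] unfolding fmla_type_def by auto
qed

lemma shorten_trace:
  assumes tr: "timed_ht_trace H T tau lam" and k: "k < lam" and c: "enc \<phi> \<le> c"
    and long: "2 * type_bound c < lam"
  obtains H' T' tau' lam' k' where "timed_ht_trace H' T' tau' lam'" and "lam' < lam" and "k' < lam'"
    and "k = 0 \<Longrightarrow> k' = 0" and "sat H' T' tau' lam' k' \<phi> \<longleftrightarrow> sat H T tau lam k \<phi>"
proof -
  let ?U = "{\<psi>. enc \<psi> \<le> c} \<times> {..c} \<times> (UNIV :: bool set)" and ?f = "fmla_type c H T tau lam"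
  have U: "finite ?U" "2 ^ card ?U \<le> type_bound c"
    using finite_enc_le card_fmla_type_space by auto
  obtain i j where ij: "i < j" "j < lam" "?f i = ?f j" and kij: "k \<le> i \<or> j \<le> k"
  proof (cases "type_bound c \<le> k")
    case True
    then have "2 ^ card ?U < card {0..k}" using U(2) by simp
    then obtain i j where "i \<in> {0..k}" "j \<in> {0..k}" "i < j" "?f i = ?f j"
      by (rule pigeonhole_subsets[OF U(1) fmla_type_subset])
    then show ?thesis using that[of i j] k by simp
  next
    case False
    then have "2 ^ card ?U < card {k..<lam}" using U(2) long by simp
    then obtain i j where "i \<in> {k..<lam}" "j \<in> {k..<lam}" "i < j" "?f i = ?f j"
      by (rule pigeonhole_subsets[OF U(1) fmla_type_subset])
    then show ?thesis using that[of i j] by simp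
  qed
  interpret segment_cut lam i j tau
    using ij timed_ht_trace_mono[OF tr] by unfold_locales auto
  obtain k' where "k' < cut_len" "k = 0 \<Longrightarrow> k' = 0"
    "sat (\<lambda>p. H (cut_pos p)) (\<lambda>p. T (cut_pos p)) cut_time cut_len k' \<phi> \<longleftrightarrow> sat H T tau lam k \<phi>"
    using sat_cut_at[OF same_fmla_type_sat[OF ij(3)] c k kij] by blast
  then show ?thesis using that timed_ht_trace_cut[OF tr] cut_len_less by blast
qed

lemma bounded_length:
  "timed_ht_trace H T tau lam \<Longrightarrow> k < lam \<Longrightarrow> enc \<phi> \<le> c \<Longrightarrow>
   \<exists>H' T' tau' lam' k'. timed_ht_trace H' T' tau' lam' \<and> lam' \<le> 2 * type_bound c \<and> k' < lam' \<and>
     (k = 0 \<longrightarrow> k' = 0) \<and> (sat H' T' tau' lam' k' \<phi> \<longleftrightarrow> sat H T tau lam k \<phi>)"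
proof (induction lam arbitrary: H T tau k rule: less_induct)
  case (less lam)
  show ?case
  proof (cases "2 * type_bound c < lam")
    case True
    obtain H' T' tau' lam' k' where "timed_ht_trace H' T' tau' lam'" "lam' < lam" "k' < lam'"
      "k = 0 \<Longrightarrow> k' = 0" "sat H' T' tau' lam' k' \<phi> \<longleftrightarrow> sat H T tau lam k \<phi>"
      by (rule shorten_trace[OF less.prems True], blast)
    then show ?thesis using less.IH[of lam' H' T' tau' k'] less.prems(3) by fastforce
  next
    case False
    then show ?thesis
      using less.prems(1,2)
      by (intro exI[of _ H] exI[of _ T] exI[of _ tau] exI[of _ lam] exI[of _ k]) auto
  qed
qed

lemma small_model:
  assumes "timed_ht_trace H T tau lam" and "k < lam"
  obtains H' T' tau' lam' k' where "timed_ht_trace H' T' tau' lam'" and "k' < lam'"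
    and "lam' \<le> 2 * type_bound (enc \<phi>)" and "k = 0 \<Longrightarrow> k' = 0"
    and "\<And>p. p < lam' \<Longrightarrow> tau' p \<le> p * enc \<phi>"
    and "sat H' T' tau' lam' k' \<phi> \<longleftrightarrow> sat H T tau lam k \<phi>"
proof -
  let ?c = "enc \<phi>"
  obtain H' T' tau1 lam' k' where tr: "timed_ht_trace H' T' tau1 lam'"
    and len: "lam' \<le> 2 * type_bound ?c"
    and k': "k' < lam'" "k = 0 \<longrightarrow> k' = 0" and sat1: "sat H' T' tau1 lam' k' \<phi> \<longleftrightarrow> sat H T tau lam k \<phi>"
    using bounded_length[OF assms order.refl] by blast
  define tau' where "tau' = clamp_time ?c tau1"
  have "gaps_agree ?c lam' tau1 tau'"
    unfolding tau'_def by (rule gaps_agree_clamp_time) (rule timed_ht_trace_mono[OF tr])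
  then have "sat H' T' tau1 lam' k' \<phi> \<longleftrightarrow> sat H' T' tau' lam' k' \<phi>"
    using k'(1) by (intro sat_cong_bounded) auto
  moreover have "timed_ht_trace H' T' tau' lam'"
    using tr by (auto simp: timed_ht_trace_def tau'_def intro: clamp_time_mono)
  ultimately show ?thesis
    using that[of H' T' tau' lam' k'] k' len sat1 clamp_time_le[of ?c tau1] unfolding tau'_def by blast
qed

section \<open>Certificates: encoded traces with a consistent labelling\<close>

definition world :: "nat \<Rightarrow> (nat \<Rightarrow> nat set) \<Rightarrow> (nat \<Rightarrow> nat set) \<Rightarrow> nat \<Rightarrow> nat set" where
  "world X H T = (if X = 0 then H else T)"

lemma world_simps [simp]: "world 0 H T = H" "world (Suc n) H T = T" "world X T T = T"
  by (simp_all add: world_def)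

text \<open>World 0 is here and world 1 is there. The clauses read the operator tag and the operands
  off the Cantor-pair structure of a code, as laid out by \<open>enc\<close> (the tag 1 of \<open>Bot\<close> falls
  through to \<open>False\<close>), so they make sense for every number, not only for codes of formulas.\<close>

definition label_step :: "(nat \<Rightarrow> nat \<Rightarrow> nat \<Rightarrow> bool) \<Rightarrow> (nat \<Rightarrow> nat \<Rightarrow> nat \<Rightarrow> bool) \<Rightarrow> (nat \<Rightarrow> nat) \<Rightarrow>
    nat \<Rightarrow> nat \<Rightarrow> nat \<Rightarrow> nat \<Rightarrow> bool" where
  "label_step L At tau lam z p X =
    (case prod_decode z of (tag, r) \<Rightarrow> case prod_decode r of (u, v) \<Rightarrow>
     case prod_decode u of (m, n) \<Rightarrow> case prod_decode v of (a, b) \<Rightarrow>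
     let inI = (\<lambda>d. m \<le> d \<and> (n = 0 \<or> d + 1 < n)) in
     if tag = 0 then At X p r
     else if tag = 2 then L u p X \<and> L v p X
     else if tag = 3 then L u p X \<or> L v p X
     else if tag = 4 then (L u p X \<longrightarrow> L v p X) \<and> (L u p 1 \<longrightarrow> L v p 1)
     else if tag = 5 then 0 < p \<and> L v (p - 1) X \<and> inI (tau p - tau (p - 1))
     else if tag = 6 then \<exists>j\<le>p. inI (tau p - tau j) \<and> L b j X \<and> (\<forall>i\<le>p. j < i \<longrightarrow> L a i X)
     else if tag = 7 then \<forall>j\<le>p. inI (tau p - tau j) \<longrightarrow> L b j X \<or> (\<exists>i\<le>p. j < i \<and> L a i X)
     else if tag = 8 then p + 1 < lam \<and> L v (p + 1) X \<and> inI (tau (p + 1) - tau p)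
     else if tag = 9 then
       \<exists>j<lam. p \<le> j \<and> inI (tau j - tau p) \<and> L b j X \<and> (\<forall>i<j. p \<le> i \<longrightarrow> L a i X)
     else if tag = 10 then
       \<forall>j<lam. p \<le> j \<and> inI (tau j - tau p) \<longrightarrow> L b j X \<or> (\<exists>i<j. p \<le> i \<and> L a i X)
     else False)"

lemma in_int_code:
  "in_int I d \<longleftrightarrow> (case prod_decode (enc_int I) of (m, n) \<Rightarrow> m \<le> d \<and> (n = 0 \<or> d + 1 < n))"
  by (cases I; rename_tac m n; case_tac n) (auto simp: enc_int_def in_int_def)

lemma label_step_enc:
  "label_step L At tau lam (enc (Atom q)) p X \<longleftrightarrow> At X p q"
  "label_step L At tau lam (enc Bot) p X \<longleftrightarrow> False"
  "label_step L At tau lam (enc (And a b)) p X \<longleftrightarrow> L (enc a) p X \<and> L (enc b) p X"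
  "label_step L At tau lam (enc (Or a b)) p X \<longleftrightarrow> L (enc a) p X \<or> L (enc b) p X"
  "label_step L At tau lam (enc (Impl a b)) p X \<longleftrightarrow>
     (L (enc a) p X \<longrightarrow> L (enc b) p X) \<and> (L (enc a) p 1 \<longrightarrow> L (enc b) p 1)"
  "label_step L At tau lam (enc (Prev I a)) p X \<longleftrightarrow>
     0 < p \<and> L (enc a) (p - 1) X \<and> in_int I (tau p - tau (p - 1))"
  "label_step L At tau lam (enc (Since I a b)) p X \<longleftrightarrow>
     (\<exists>j\<le>p. in_int I (tau p - tau j) \<and> L (enc b) j X \<and> (\<forall>i\<le>p. j < i \<longrightarrow> L (enc a) i X))"
  "label_step L At tau lam (enc (Trigger I a b)) p X \<longleftrightarrow>
     (\<forall>j\<le>p. in_int I (tau p - tau j) \<longrightarrow> L (enc b) j X \<or> (\<exists>i\<le>p. j < i \<and> L (enc a) i X))"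
  "label_step L At tau lam (enc (Next I a)) p X \<longleftrightarrow>
     p + 1 < lam \<and> L (enc a) (p + 1) X \<and> in_int I (tau (p + 1) - tau p)"
  "label_step L At tau lam (enc (Until I a b)) p X \<longleftrightarrow>
     (\<exists>j<lam. p \<le> j \<and> in_int I (tau j - tau p) \<and> L (enc b) j X \<and> (\<forall>i<j. p \<le> i \<longrightarrow> L (enc a) i X))"
  "label_step L At tau lam (enc (Release I a b)) p X \<longleftrightarrow>
     (\<forall>j<lam. p \<le> j \<and> in_int I (tau j - tau p) \<longrightarrow> L (enc b) j X \<or> (\<exists>i<j. p \<le> i \<and> L (enc a) i X))"
  by (simp_all add: label_step_def in_int_code split: prod.split)

lemma consistent_label_sat:
  assumes cons: "\<And>z p X. z \<le> x \<Longrightarrow> p < lam \<Longrightarrow> X < 2 \<Longrightarrow> L z p X \<longleftrightarrow> label_step L At tau lam z p X"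
    and atoms: "\<And>p a X. p < lam \<Longrightarrow> a \<le> x \<Longrightarrow> X < 2 \<Longrightarrow> At X p a \<longleftrightarrow> a \<in> world X H T p"
  shows "enc \<psi> \<le> x \<Longrightarrow> p < lam \<Longrightarrow> X < 2 \<Longrightarrow> L (enc \<psi>) p X \<longleftrightarrow> sat (world X H T) T tau lam p \<psi>"
proof (induction \<psi> arbitrary: p X)
  case (Atom q)
  then show ?case using cons[OF Atom.prems] atoms[OF Atom.prems(2) enc_bounds(1)[OF Atom.prems(1)]]
    by (simp add: label_step_enc del: enc.simps)
next
  case Bot
  then show ?case using cons[OF Bot.prems] by (simp add: label_step_enc del: enc.simps)
next
  case (And a b)
  then show ?case
    using cons[OF And.prems] enc_bounds(2)[OF And.prems(1)] by (simp add: label_step_enc del: enc.simps)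
next
  case (Or a b)
  then show ?case
    using cons[OF Or.prems] enc_bounds(3)[OF Or.prems(1)] by (simp add: label_step_enc del: enc.simps)
next
  case (Impl a b)
  then show ?case
    using cons[OF Impl.prems] enc_bounds(4)[OF Impl.prems(1)] Impl.IH[of p 1]
    by (simp add: label_step_enc del: enc.simps)
next
  case (Prev I a)
  then show ?case
    using cons[OF Prev.prems] enc_bounds(5)[OF Prev.prems(1)] Prev.IH[of "p - 1" X]
    by (auto simp: label_step_enc simp del: enc.simps)
next
  case (Next I a)
  then show ?case
    using cons[OF Next.prems] enc_bounds(6)[OF Next.prems(1)] Next.IH[of "p + 1" X]
    by (auto simp: label_step_enc simp del: enc.simps)
next
  case (Since I a b)
  have "L (enc a) q X = sat (world X H T) T tau lam q a"
    and "L (enc b) q X = sat (world X H T) T tau lam q b"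
    if "q \<le> p" for q
    using Since.IH[of q X] Since.prems enc_bounds(7)[OF Since.prems(1)] that by auto
  then show ?case
    using cons[OF Since.prems] by (simp add: label_step_enc del: enc.simps cong: conj_cong) blast
next
  case (Trigger I a b)
  have "L (enc a) q X = sat (world X H T) T tau lam q a"
    and "L (enc b) q X = sat (world X H T) T tau lam q b"
    if "q \<le> p" for q
    using Trigger.IH[of q X] Trigger.prems enc_bounds(8)[OF Trigger.prems(1)] that by auto
  then show ?case
    using cons[OF Trigger.prems]
    by (simp add: label_step_enc del: enc.simps cong: conj_cong imp_cong) blast
next
  case (Until I a b)
  have "L (enc a) q X = sat (world X H T) T tau lam q a"
    and "L (enc b) q X = sat (world X H T) T tau lam q b"
    if "q < lam" for q
    using Until.IH[of q X] Until.prems enc_bounds(9)[OF Until.prems(1)] that by auto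
  then show ?case using cons[OF Until.prems] by (auto simp: label_step_enc simp del: enc.simps)
next
  case (Release I a b)
  have "L (enc a) q X = sat (world X H T) T tau lam q a"
    and "L (enc b) q X = sat (world X H T) T tau lam q b"
    if "q < lam" for q
    using Release.IH[of q X] Release.prems enc_bounds(10)[OF Release.prems(1)] that by auto
  then show ?case using cons[OF Release.prems] by (auto simp: label_step_enc simp del: enc.simps)
qed

lemma label_step_cong:
  assumes eq: "\<And>z' p' X'. z' < z \<Longrightarrow> p' < lam \<Longrightarrow> X' < 2 \<Longrightarrow> L z' p' X' = L' z' p' X'"
    and "p < lam" and "X < 2"
  shows "label_step L At tau lam z p X = label_step L' At tau lam z p X"
proof -
  obtain tag r u v m n a b where z: "prod_decode z = (tag, r)" and r: "prod_decode r = (u, v)"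
    and u: "prod_decode u = (m, n)" and v: "prod_decode v = (a, b)"
    by (metis surj_pair)
  show ?thesis
  proof (cases "tag = 0")
    case False
    have "n \<le> triangle n" for n by (induction n) auto
    then have "r \<le> triangle (tag + r)" by (meson le_add2 le_trans)
    moreover have "z = triangle (tag + r) + tag"
      using z prod_decode_inverse[of z] by (simp add: prod_encode_def)
    ultimately have "r < z" using False by simp
    moreover have "u \<le> r" "v \<le> r" "a \<le> v" "b \<le> v"
      using r v prod_decode_inverse le_prod_encode_1 le_prod_encode_2 by metis+
    ultimately have "y < z" if "y \<in> {u, v, a, b}" for y using that by auto
    then have L: "L y q X' = L' y q X'" if "y \<in> {u, v, a, b}" "q < lam" "X' < 2" for y q X'
      using eq that by blast
    have "q \<le> p \<Longrightarrow> q < lam" "p - 1 < lam" for q using assms(2) by auto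
    then show ?thesis
      using assms(3) unfolding label_step_def z r u v Let_def prod.case
      by (simp add: L cong: conj_cong imp_cong)
  qed (simp add: label_step_def z)
qed

text \<open>Consistent labellings exist: take the fixpoint of \<open>label_step\<close>, which is well-founded
  because operands have smaller codes than the formula.\<close>

definition canonical_label :: "(nat \<Rightarrow> nat \<Rightarrow> nat \<Rightarrow> bool) \<Rightarrow> (nat \<Rightarrow> nat) \<Rightarrow> nat \<Rightarrow>
    nat \<Rightarrow> nat \<Rightarrow> nat \<Rightarrow> bool" where
  "canonical_label At tau lam =
     wfrec (measure id) (\<lambda>f z p X. p < lam \<and> X < 2 \<and> label_step f At tau lam z p X)"

lemma canonical_label_step:
  assumes "p < lam" and "X < 2"
  shows "canonical_label At tau lam z p X = label_step (canonical_label At tau lam) At tau lam z p X"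
proof -
  have "canonical_label At tau lam z =
      (\<lambda>p X. p < lam \<and> X < 2 \<and>
        label_step (cut (canonical_label At tau lam) (measure id) z) At tau lam z p X)"
    unfolding canonical_label_def by (rule wfrec) simp
  then have "canonical_label At tau lam z p X =
      label_step (cut (canonical_label At tau lam) (measure id) z) At tau lam z p X"
    using assms by simp
  also have "\<dots> = label_step (canonical_label At tau lam) At tau lam z p X"
    by (rule label_step_cong) (auto simp: cut_apply assms)
  finally show ?thesis .
qed

definition digit :: "nat \<Rightarrow> nat \<Rightarrow> nat \<Rightarrow> nat" where
  "digit base c i = c div base ^ i mod base"

definition from_digits :: "nat \<Rightarrow> nat \<Rightarrow> (nat \<Rightarrow> nat) \<Rightarrow> nat" where
  "from_digits b n f = (\<Sum>j<n. f j * b ^ j)"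

lemma from_digits_less: "(\<And>j. j < n \<Longrightarrow> f j < b) \<Longrightarrow> from_digits b n f < b ^ n"
proof (induction n)
  case (Suc n)
  have "from_digits b (Suc n) f = from_digits b n f + f n * b ^ n" by (simp add: from_digits_def)
  also have "\<dots> < (f n + 1) * b ^ n" using Suc by simp
  also have "\<dots> \<le> b * b ^ n" using Suc.prems[of n] by (intro mult_le_mono1) simp
  finally show ?case by simp
qed (simp add: from_digits_def)

lemma digit_from_digits:
  assumes "\<And>j. j < n \<Longrightarrow> f j < b" and "i < n"
  shows "digit b (from_digits b n f) i = f i"
  using assms
proof (induction n)
  case (Suc n)
  have b: "0 < b" using Suc.prems(1)[of 0] by simp
  have step: "from_digits b (Suc n) f = from_digits b n f + f n * b ^ n" by (simp add: from_digits_def)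
  show ?case
  proof (cases "i = n")
    case True
    have "from_digits b n f < b ^ n" using Suc.prems(1) by (intro from_digits_less) auto
    then have "from_digits b (Suc n) f div b ^ n = f n" using b step by simp
    then show ?thesis using True Suc.prems(1) unfolding digit_def by simp
  next
    case False
    then have i: "i < n" using Suc.prems(2) by simp
    have "n = Suc (n - Suc i + i)" using i by simp
    then have "b ^ n = b * b ^ (n - Suc i) * b ^ i" by (metis power_Suc power_add mult.assoc)
    then have "f n * b ^ n = (b * (f n * b ^ (n - Suc i))) * b ^ i" by (simp only: mult_ac)
    then have "from_digits b (Suc n) f = from_digits b n f + (b * (f n * b ^ (n - Suc i))) * b ^ i"
      using step by simp
    then have "from_digits b (Suc n) f div b ^ i =
        from_digits b n f div b ^ i + b * (f n * b ^ (n - Suc i))"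
      using b by simp
    then have "digit b (from_digits b (Suc n) f) i = digit b (from_digits b n f) i"
      unfolding digit_def by simp
    then show ?thesis using Suc i by simp
  qed
qed simp

lemma digits_exist:
  assumes "0 < b" and "inj_on idx I" and "\<And>i. i \<in> I \<Longrightarrow> idx i < n" and "\<And>i. i \<in> I \<Longrightarrow> g i < b"
  obtains c where "c < b ^ n" and "\<And>i. i \<in> I \<Longrightarrow> digit b c (idx i) = g i"
proof -
  define f where "f j = (if j \<in> idx ` I then g (the_inv_into I idx j) else 0)" for j
  have f: "f j < b" if "j < n" for j
    using assms(1,4) the_inv_into_into[OF assms(2)] by (auto simp: f_def)
  have "digit b (from_digits b n f) (idx i) = g i" if "i \<in> I" for i
  proof -
    have "f (idx i) = g i" using that assms(2) by (simp add: f_def the_inv_into_f_f)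
    then show ?thesis using digit_from_digits[of n f b, OF f assms(3)[OF that]] by simp
  qed
  with from_digits_less[of n f b, OF f] show ?thesis by (rule that)
qed

lemma mixed_radix_less:
  fixes p n a m :: nat
  assumes "p < n" and "a < m"
  shows "p * m + a < n * m"
proof -
  have "p * m + a < Suc p * m" using assms(2) by simp
  also have "\<dots> \<le> n * m" using assms(1) by (intro mult_le_mono1) simp
  finally show ?thesis .
qed

lemma mixed_radix_inj:
  fixes p p' a a' m :: nat
  assumes "a < m" and "a' < m" and "p * m + a = p' * m + a'"
  shows "p = p' \<and> a = a'"
proof -
  have "(p * m + a) div m = p" "(p * m + a) mod m = a"
    "(p' * m + a') div m = p'" "(p' * m + a') mod m = a'"
    using assms(1,2) by simp_all
  then show ?thesis using assms(3) by simp
qed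

lemma encode_bit_table:
  obtains c where "c < 2 ^ (n * m)"
    and "\<And>p a. p < n \<Longrightarrow> a < m \<Longrightarrow> digit 2 c (p * m + a) = (if P p a then 1 else 0)"
proof (rule digits_exist[of 2 "\<lambda>(p, a). p * m + a" "{..<n} \<times> {..<m}" "n * m"
    "\<lambda>(p, a). if P p a then 1 else 0"])
  show "inj_on (\<lambda>(p, a). p * m + a) ({..<n} \<times> {..<m})"
    by (auto intro!: inj_onI dest: mixed_radix_inj)
qed (use that in \<open>auto intro: mixed_radix_less\<close>)

definition atom_table :: "nat \<Rightarrow> nat \<Rightarrow> nat \<Rightarrow> nat \<Rightarrow> nat \<Rightarrow> nat \<Rightarrow> bool" where
  "atom_table x hc tc X p a \<longleftrightarrow> digit 2 (if X = 0 then hc else tc) (p * (x + 1) + a) = 1"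

definition time_table :: "nat \<Rightarrow> nat \<Rightarrow> nat \<Rightarrow> nat \<Rightarrow> nat" where
  "time_table x lam ta p = digit (lam * (x + 1) + 1) ta p"

definition label_table :: "nat \<Rightarrow> nat \<Rightarrow> nat \<Rightarrow> nat \<Rightarrow> nat \<Rightarrow> bool" where
  "label_table lam Lc z p X \<longleftrightarrow> digit 2 Lc ((z * lam + p) * 2 + X) = 1"

lemma encode_time_table:
  assumes "\<And>p. p < lam \<Longrightarrow> tau p \<le> p * x"
  obtains ta where "ta < (lam * (x + 1) + 1) ^ lam" and "\<And>p. p < lam \<Longrightarrow> time_table x lam ta p = tau p"
proof (rule digits_exist[of "lam * (x + 1) + 1" id "{..<lam}" lam tau])
  fix p assume "p \<in> {..<lam}"
  then have "tau p \<le> lam * x"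
    using assms[of p] by (meson lessThan_iff le_trans less_imp_le mult_le_mono1)
  then show "tau p < lam * (x + 1) + 1" by simp
qed (use that in \<open>auto simp: time_table_def\<close>)

lemma encode_label_table:
  obtains Lc where "Lc < 2 ^ ((x + 1) * lam * 2)"
    and "\<And>z p X. z \<le> x \<Longrightarrow> p < lam \<Longrightarrow> X < 2 \<Longrightarrow> label_table lam Lc z p X = L z p X"
proof (rule encode_bit_table[of "(x + 1) * lam" 2 "\<lambda>q X. L (q div lam) (q mod lam) X"])
  fix Lc assume Lc: "Lc < 2 ^ ((x + 1) * lam * 2)" and digits: "\<And>q X. q < (x + 1) * lam \<Longrightarrow> X < 2 \<Longrightarrow>
    digit 2 Lc (q * 2 + X) = (if L (q div lam) (q mod lam) X then 1 else 0)"
  have "label_table lam Lc z p X = L z p X" if "z \<le> x" "p < lam" "X < 2" for z p X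
  proof -
    have "z * lam + p < (x + 1) * lam" using that mixed_radix_less[of z "x + 1" p lam] by simp
    then show ?thesis using digits[of "z * lam + p" X] that by (simp add: label_table_def)
  qed
  with Lc show ?thesis by (rule that)
qed

definition trace_table_ok :: "nat \<Rightarrow> nat \<Rightarrow> nat \<Rightarrow> nat \<Rightarrow> nat \<Rightarrow> bool" where
  "trace_table_ok x lam hc tc ta \<longleftrightarrow> time_table x lam ta 0 = 0 \<and>
     (\<forall>p<lam. p + 1 < lam \<longrightarrow> time_table x lam ta p \<le> time_table x lam ta (p + 1)) \<and>
     (\<forall>p<lam. \<forall>a<x + 1. digit 2 hc (p * (x + 1) + a) \<le> digit 2 tc (p * (x + 1) + a))"

definition label_table_ok :: "nat \<Rightarrow> nat \<Rightarrow> nat \<Rightarrow> nat \<Rightarrow> nat \<Rightarrow> nat \<Rightarrow> bool" where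
  "label_table_ok x lam hc tc ta Lc \<longleftrightarrow> (\<forall>z<x + 1. \<forall>p<lam. \<forall>X<2. label_table lam Lc z p X =
     label_step (label_table lam Lc) (atom_table x hc tc) (time_table x lam ta) lam z p X)"

definition has_certificate :: "(nat \<Rightarrow> nat \<Rightarrow> nat \<Rightarrow> bool) \<Rightarrow> nat \<Rightarrow> bool" where
  "has_certificate fin x \<longleftrightarrow> (\<exists>lam<2 * type_bound x + 1. \<exists>k<lam.
     \<exists>hc<2 ^ (lam * (x + 1)). \<exists>tc<2 ^ (lam * (x + 1)). \<exists>ta<(lam * (x + 1) + 1) ^ lam.
     \<exists>Lc<2 ^ ((x + 1) * lam * 2).
       trace_table_ok x lam hc tc ta \<and> label_table_ok x lam hc tc ta Lc \<and> fin lam k Lc)"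

lemma certificate_sound:
  assumes "has_certificate fin (enc \<phi>)"
  obtains H T tau lam k Lc where "timed_ht_trace H T tau lam" and "k < lam" and "fin lam k Lc"
    and "label_table lam Lc (enc \<phi>) k 0 \<longleftrightarrow> sat H T tau lam k \<phi>"
proof -
  let ?x = "enc \<phi>"
  obtain lam k hc tc ta Lc where k: "k < lam" and tr: "trace_table_ok ?x lam hc tc ta"
    and ok: "label_table_ok ?x lam hc tc ta Lc" and fin: "fin lam k Lc"
    using assms unfolding has_certificate_def by blast
  define H where "H p = {a. a \<le> ?x \<and> atom_table ?x hc tc 0 p a}" for p
  define T where "T p = {a. a \<le> ?x \<and> atom_table ?x hc tc 1 p a}" for p
  have "digit 2 tc i \<le> 1" for i by (simp add: digit_def)
  then have "timed_ht_trace H T (time_table ?x lam ta) lam"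
    using tr unfolding trace_table_ok_def timed_ht_trace_def H_def T_def atom_table_def
    by (auto simp: less_Suc_eq_le) (metis le_antisym)
  moreover have "label_table lam Lc ?x k 0 \<longleftrightarrow> sat (world 0 H T) T (time_table ?x lam ta) lam k \<phi>"
    by (rule consistent_label_sat[where x = ?x and At = "atom_table ?x hc tc"])
      (use ok k in \<open>auto simp: label_table_ok_def H_def T_def world_def less_2_cases_iff\<close>)
  ultimately show ?thesis using that k fin by simp
qed

lemma encode_trace:
  assumes tr: "timed_ht_trace H T tau lam" and lam: "0 < lam" and bnd: "\<And>p. p < lam \<Longrightarrow> tau p \<le> p * x"
  obtains hc tc ta where "hc < 2 ^ (lam * (x + 1))" and "tc < 2 ^ (lam * (x + 1))"
    and "ta < (lam * (x + 1) + 1) ^ lam" and "trace_table_ok x lam hc tc ta"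
    and "\<And>X p a. p < lam \<Longrightarrow> a \<le> x \<Longrightarrow> X < 2 \<Longrightarrow> atom_table x hc tc X p a \<longleftrightarrow> a \<in> world X H T p"
    and "\<And>p. p < lam \<Longrightarrow> time_table x lam ta p = tau p"
proof -
  obtain hc where hc: "hc < 2 ^ (lam * (x + 1))"
    "\<And>p a. p < lam \<Longrightarrow> a < x + 1 \<Longrightarrow> digit 2 hc (p * (x + 1) + a) = (if a \<in> H p then 1 else 0)"
    by (rule encode_bit_table[of lam "x + 1" "\<lambda>p a. a \<in> H p"], blast)
  obtain tc where tc: "tc < 2 ^ (lam * (x + 1))"
    "\<And>p a. p < lam \<Longrightarrow> a < x + 1 \<Longrightarrow> digit 2 tc (p * (x + 1) + a) = (if a \<in> T p then 1 else 0)"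
    by (rule encode_bit_table[of lam "x + 1" "\<lambda>p a. a \<in> T p"], blast)
  obtain ta where ta: "ta < (lam * (x + 1) + 1) ^ lam" "\<And>p. p < lam \<Longrightarrow> time_table x lam ta p = tau p"
    using encode_time_table[of lam tau x] bnd by blast
  have "trace_table_ok x lam hc tc ta"
    using tr lam hc(2) tc(2) ta(2) unfolding trace_table_ok_def timed_ht_trace_def by auto
  moreover have "atom_table x hc tc X p a \<longleftrightarrow> a \<in> world X H T p" if "p < lam" "a \<le> x" "X < 2" for X p a
    using that hc(2) tc(2) by (auto simp: atom_table_def world_def)
  ultimately show ?thesis using that hc(1) tc(1) ta by blast
qed

lemma certificate_complete:
  assumes tr: "timed_ht_trace H T tau lam" and k: "k < lam" and len: "lam \<le> 2 * type_bound (enc \<phi>)"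
    and bnd: "\<And>p. p < lam \<Longrightarrow> tau p \<le> p * enc \<phi>"
    and fin: "\<And>Lc. (label_table lam Lc (enc \<phi>) k 0 \<longleftrightarrow> sat H T tau lam k \<phi>) \<Longrightarrow> fin lam k Lc"
  shows "has_certificate fin (enc \<phi>)"
proof -
  let ?x = "enc \<phi>"
  have lam: "0 < lam" using k by simp
  obtain hc tc ta where codes: "hc < 2 ^ (lam * (?x + 1))" "tc < 2 ^ (lam * (?x + 1))"
      "ta < (lam * (?x + 1) + 1) ^ lam" and trace_ok: "trace_table_ok ?x lam hc tc ta"
    and At: "\<And>X p a. p < lam \<Longrightarrow> a \<le> ?x \<Longrightarrow> X < 2 \<Longrightarrow> atom_table ?x hc tc X p a \<longleftrightarrow> a \<in> world X H T p"
    and ta: "\<And>p. p < lam \<Longrightarrow> time_table ?x lam ta p = tau p"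
    using encode_trace[OF tr lam bnd] by metis
  define tau' where "tau' = time_table ?x lam ta"
  define L where "L = canonical_label (atom_table ?x hc tc) tau' lam"
  obtain Lc where Lc: "Lc < 2 ^ ((?x + 1) * lam * 2)"
    "\<And>z p X. z \<le> ?x \<Longrightarrow> p < lam \<Longrightarrow> X < 2 \<Longrightarrow> label_table lam Lc z p X = L z p X"
    by (rule encode_label_table[where x = ?x and lam = lam and L = L], blast)
  have cons:
      "label_table lam Lc z p X \<longleftrightarrow> label_step (label_table lam Lc) (atom_table ?x hc tc) tau' lam z p X"
    if "z \<le> ?x" "p < lam" "X < 2" for z p X
  proof -
    have "label_table lam Lc z p X \<longleftrightarrow> label_step L (atom_table ?x hc tc) tau' lam z p X"
      using that Lc(2) canonical_label_step by (simp add: L_def)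
    also have "\<dots> \<longleftrightarrow> label_step (label_table lam Lc) (atom_table ?x hc tc) tau' lam z p X"
      using that Lc(2) by (intro label_step_cong) auto
    finally show ?thesis .
  qed
  have "label_table lam Lc ?x k 0 \<longleftrightarrow> sat (world 0 H T) T tau' lam k \<phi>"
    by (rule consistent_label_sat[where x = ?x and At = "atom_table ?x hc tc"]) (use cons At k in auto)
  also have "\<dots> \<longleftrightarrow> sat H T tau lam k \<phi>"
    using k ta by (intro sat_cong_bounded) (auto simp: tau'_def gaps_agree_def)
  finally have "fin lam k Lc" by (rule fin)
  moreover have "label_table_ok ?x lam hc tc ta Lc"
    using cons unfolding label_table_ok_def tau'_def by auto
  moreover have "lam < 2 * type_bound ?x + 1" using len by simp
  ultimately show ?thesis
    unfolding has_certificate_def using k codes Lc(1) trace_ok by blast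
qed

lemma MHTf_satisfiable_iff_certificate:
  "MHTf_satisfiable \<phi> \<longleftrightarrow> has_certificate (\<lambda>lam k Lc. k = 0 \<and> label_table lam Lc (enc \<phi>) k 0) (enc \<phi>)"
proof
  assume "MHTf_satisfiable \<phi>"
  then obtain H T tau lam where tr: "timed_ht_trace H T tau lam" "0 < lam" "sat H T tau lam 0 \<phi>"
    unfolding MHTf_satisfiable_def by blast
  obtain H' T' tau' lam' k' where "timed_ht_trace H' T' tau' lam'" "k' < lam'"
    "lam' \<le> 2 * type_bound (enc \<phi>)" "k' = 0"
    "\<And>p. p < lam' \<Longrightarrow> tau' p \<le> p * enc \<phi>"
    "sat H' T' tau' lam' k' \<phi> \<longleftrightarrow> sat H T tau lam 0 \<phi>"
    by (rule small_model[OF tr(1,2), where \<phi> = \<phi>], blast)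
  then show "has_certificate (\<lambda>lam k Lc. k = 0 \<and> label_table lam Lc (enc \<phi>) k 0) (enc \<phi>)"
    using tr(3) by (intro certificate_complete) auto
next
  assume "has_certificate (\<lambda>lam k Lc. k = 0 \<and> label_table lam Lc (enc \<phi>) k 0) (enc \<phi>)"
  then show "MHTf_satisfiable \<phi>"
    unfolding MHTf_satisfiable_def by (rule certificate_sound) auto
qed

lemma MHTf_tautology_iff_no_certificate:
  "MHTf_tautology \<phi> \<longleftrightarrow> \<not> has_certificate (\<lambda>lam k Lc. \<not> label_table lam Lc (enc \<phi>) k 0) (enc \<phi>)"
proof
  assume "MHTf_tautology \<phi>"
  then show "\<not> has_certificate (\<lambda>lam k Lc. \<not> label_table lam Lc (enc \<phi>) k 0) (enc \<phi>)"
    unfolding MHTf_tautology_def by (auto elim: certificate_sound)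
next
  assume no: "\<not> has_certificate (\<lambda>lam k Lc. \<not> label_table lam Lc (enc \<phi>) k 0) (enc \<phi>)"
  show "MHTf_tautology \<phi>" unfolding MHTf_tautology_def
  proof (intro allI impI, rule ccontr)
    fix H T tau lam k
    assume tr: "timed_ht_trace H T tau lam" "k < lam" "\<not> sat H T tau lam k \<phi>"
    obtain H' T' tau' lam' k' where "timed_ht_trace H' T' tau' lam'" "k' < lam'"
      "lam' \<le> 2 * type_bound (enc \<phi>)"
      "\<And>p. p < lam' \<Longrightarrow> tau' p \<le> p * enc \<phi>"
      "sat H' T' tau' lam' k' \<phi> \<longleftrightarrow> sat H T tau lam k \<phi>"
      by (rule small_model[OF tr(1,2), where \<phi> = \<phi>], blast)
    then have "has_certificate (\<lambda>lam k Lc. \<not> label_table lam Lc (enc \<phi>) k 0) (enc \<phi>)"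
      using tr(3) by (intro certificate_complete) auto
    with no show False ..
  qed
qed

section \<open>Mu-recursive functions and arithmetic terms\<close>

lemma eval_PrimRec_fun:
  assumes "eval f xs (F 0)" and "\<And>i. eval g (i # F i # xs) (F (Suc i))"
  shows "eval (PrimRec f g) (y # xs) (F y)"
  by (induction y) (use assms in \<open>auto intro: eval_Pr0 eval_PrS\<close>)

lemma eval_Comp1: "eval g xs a \<Longrightarrow> eval f [a] r \<Longrightarrow> eval (Comp f [g]) xs r"
  by (rule eval_Comp[where ys = "[a]"]) auto

lemma eval_Comp2:
  "eval g1 xs a \<Longrightarrow> eval g2 xs b \<Longrightarrow> eval f [a, b] r \<Longrightarrow> eval (Comp f [g1, g2]) xs r"
  by (rule eval_Comp[where ys = "[a, b]"]) (auto simp: less_Suc_eq)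

lemma eval_Comp3:
  "eval g1 xs a \<Longrightarrow> eval g2 xs b \<Longrightarrow> eval g3 xs c \<Longrightarrow> eval f [a, b, c] r \<Longrightarrow>
   eval (Comp f [g1, g2, g3]) xs r"
  by (rule eval_Comp[where ys = "[a, b, c]"]) (auto simp: less_Suc_eq)

lemma eval_ProjI: "i < length xs \<Longrightarrow> r = xs ! i \<Longrightarrow> eval (Proj i) xs r"
  using eval_Proj by simp

primrec recf_const :: "nat \<Rightarrow> recf" where
  "recf_const 0 = Zero"
| "recf_const (Suc n) = Comp Succ [recf_const n]"

lemma eval_recf_const: "eval (recf_const n) xs n"
  by (induction n) (auto intro: eval_Zero eval_Succ eval_Comp1)

definition "recf_add = PrimRec (Proj 0) (Comp Succ [Proj 1])"

lemma eval_recf_add: "eval recf_add [a, b] (a + b)"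
  unfolding recf_add_def
  by (rule eval_PrimRec_fun[where F = "\<lambda>a. a + b", simplified])
     (auto intro!: eval_ProjI eval_Comp1 eval_Succ)

definition "recf_mult = PrimRec Zero (Comp recf_add [Proj 1, Proj 2])"

lemma eval_recf_mult: "eval recf_mult [a, b] (a * b)"
  unfolding recf_mult_def
proof (rule eval_PrimRec_fun[where F = "\<lambda>a. a * b", simplified])
  fix i
  have "eval recf_add [i * b, b] (b + i * b)"
    using eval_recf_add[of "i * b" b] by (simp add: add.commute)
  then show "eval (Comp recf_add [Proj 1, Proj 2]) [i, i * b, b] (b + i * b)"
    by (rule eval_Comp2[rotated 2]) (auto intro: eval_ProjI)
qed (rule eval_Zero)

definition "recf_pred = PrimRec Zero (Proj 0)"

lemma eval_recf_pred: "eval recf_pred [a] (a - 1)"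
  unfolding recf_pred_def
  by (rule eval_PrimRec_fun[where F = "\<lambda>a. a - 1"]) (auto intro: eval_ProjI eval_Zero)

text \<open>Truncated subtraction, recursing on the subtrahend, which therefore comes first.\<close>

definition "recf_monus = PrimRec (Proj 0) (Comp recf_pred [Proj 1])"

lemma eval_recf_monus: "eval recf_monus [b, a] (a - b)"
  unfolding recf_monus_def
proof (rule eval_PrimRec_fun[where F = "\<lambda>b. a - b", simplified])
  fix i
  have "eval recf_pred [a - i] (a - Suc i)"
    using eval_recf_pred[of "a - i"] by simp
  then show "eval (Comp recf_pred [Proj 1]) [i, a - i, a] (a - Suc i)"
    by (rule eval_Comp1[rotated]) (auto intro: eval_ProjI)
qed (auto intro: eval_ProjI)

definition "recf_power = PrimRec (recf_const 1) (Comp recf_mult [Proj 1, Proj 2])"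

lemma eval_recf_power: "eval recf_power [e, b] (b ^ e)"
  unfolding recf_power_def
proof (rule eval_PrimRec_fun[where F = "\<lambda>e. b ^ e"])
  show "eval (recf_const 1) [b] (b ^ 0)" using eval_recf_const[of 1] by simp
  fix i
  have "eval recf_mult [b ^ i, b] (b ^ Suc i)"
    using eval_recf_mult[of "b ^ i" b] by (simp add: mult.commute)
  then show "eval (Comp recf_mult [Proj 1, Proj 2]) [i, b ^ i, b] (b ^ Suc i)"
    by (rule eval_Comp2[rotated 2]) (auto intro: eval_ProjI)
qed

definition "recf_if = PrimRec (Proj 1) (Proj 2)"

lemma eval_recf_if: "eval recf_if [c, a, b] (if c = 0 then b else a)"
  unfolding recf_if_def
  by (rule eval_PrimRec_fun[where F = "\<lambda>c. if c = 0 then b else a", simplified])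
     (auto intro!: eval_ProjI)

definition "recf_less = Comp recf_if [Comp recf_monus [Proj 0, Proj 1], recf_const 1, Zero]"

lemma eval_recf_less: "eval recf_less [a, b] (if a < b then 1 else 0)"
proof -
  have diff: "eval (Comp recf_monus [Proj 0, Proj 1]) [a, b] (b - a)"
    by (rule eval_Comp2[OF _ _ eval_recf_monus]) (auto intro: eval_ProjI)
  have "eval recf_if [b - a, 1, 0] (if a < b then 1 else 0)"
    using eval_recf_if[of "b - a" 1 0] by (cases "a < b") simp_all
  then show ?thesis
    unfolding recf_less_def by (rule eval_Comp3[OF diff eval_recf_const eval_Zero])
qed

primrec bounded_min :: "nat \<Rightarrow> (nat \<Rightarrow> bool) \<Rightarrow> nat" where
  "bounded_min 0 P = 0"
| "bounded_min (Suc n) P =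
    (if bounded_min n P < n then bounded_min n P else if P n then n else Suc n)"

lemma bounded_min_le: "bounded_min n P \<le> n"
  by (induction n) auto

lemma bounded_min_less_iff: "bounded_min n P < n \<longleftrightarrow> (\<exists>y<n. P y)"
  by (induction n) (auto simp: less_Suc_eq dest: order.antisym[OF bounded_min_le])

lemma bounded_min_eqI:
  assumes "m < n" and "P m" and "\<And>y. y < m \<Longrightarrow> \<not> P y"
  shows "bounded_min n P = m"
  using assms
proof (induction n)
  case (Suc n)
  show ?case
  proof (cases "m < n")
    case True
    then show ?thesis using Suc by simp
  next
    case False
    then have "m = n" using Suc.prems(1) by simp
    then have "bounded_min n P = n"
      using bounded_min_less_iff[of n P] bounded_min_le[of n P] Suc.prems(3) by auto
    then show ?thesis using \<open>m = n\<close> Suc.prems(2) by simp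
  qed
qed simp

definition recf_bmin :: "nat \<Rightarrow> recf \<Rightarrow> recf" where
  "recf_bmin n f = PrimRec Zero
     (Comp recf_if [Comp recf_less [Proj 1, Proj 0], Proj 1,
        Comp recf_if [Comp f (Proj 0 # map (\<lambda>k. Proj (k + 2)) [0..<n]), Proj 0, Comp Succ [Proj 0]]])"

lemma eval_recf_ifI: "r = (if c = 0 then b else a) \<Longrightarrow> eval recf_if [c, a, b] r"
  using eval_recf_if by simp

lemma eval_recf_bmin:
  assumes "length xs = n" and "\<And>y. eval f (y # xs) (F y)"
  shows "eval (recf_bmin n f) (m # xs) (bounded_min m (\<lambda>y. F y \<noteq> 0))"
proof -
  define P where "P = (\<lambda>y. F y \<noteq> 0)"
  have step: "eval (Comp recf_if [Comp recf_less [Proj 1, Proj 0], Proj 1,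
      Comp recf_if [Comp f (Proj 0 # map (\<lambda>k. Proj (k + 2)) [0..<n]), Proj 0, Comp Succ [Proj 0]]])
    (i # bounded_min i P # xs) (bounded_min (Suc i) P)" for i
  proof (rule eval_Comp3)
    show "eval (Comp recf_less [Proj 1, Proj 0]) (i # bounded_min i P # xs)
      (if bounded_min i P < i then 1 else 0)"
      by (rule eval_Comp2[OF _ _ eval_recf_less]) (auto intro: eval_ProjI)
    have "eval (Comp f (Proj 0 # map (\<lambda>k. Proj (k + 2)) [0..<n])) (i # bounded_min i P # xs) (F i)"
      by (rule eval_Comp[where ys = "i # xs"])
         (use assms in \<open>auto intro!: eval_ProjI simp: nth_Cons'\<close>)
    then show "eval (Comp recf_if [Comp f (Proj 0 # map (\<lambda>k. Proj (k + 2)) [0..<n]), Proj 0,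
        Comp Succ [Proj 0]]) (i # bounded_min i P # xs) (if P i then i else Suc i)"
      by (rule eval_Comp3[OF _ _ eval_Comp1[OF _ eval_Succ] eval_recf_ifI])
         (auto intro: eval_ProjI simp: P_def)
  qed (auto intro: eval_ProjI eval_recf_ifI)
  show ?thesis
    unfolding recf_bmin_def P_def[symmetric]
    by (rule eval_PrimRec_fun[where F = "\<lambda>m. bounded_min m P", OF _ step]) (simp add: eval_Zero)
qed

text \<open>For \<open>b > 0\<close>, \<open>a div b\<close> is the least \<open>q\<close> with \<open>a < (q + 1) * b\<close>.\<close>

definition "recf_div = Comp recf_if [Proj 1,
   Comp (recf_bmin 2 (Comp recf_less [Proj 1, Comp recf_mult [Comp Succ [Proj 0], Proj 2]]))
     [Comp Succ [Proj 0], Proj 0, Proj 1],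
   Zero]"

lemma bounded_min_div:
  assumes "0 < b"
  shows "bounded_min (Suc a) (\<lambda>q. a < Suc q * b) = a div b"
proof (rule bounded_min_eqI)
  show "a div b < Suc a" by (simp add: le_imp_less_Suc div_le_dividend)
  show "a < Suc (a div b) * b"
    using assms by (metis div_mult_mod_eq mod_less_divisor mult_Suc add_less_cancel_left add.commute)
  fix y assume "y < a div b"
  then have "Suc y * b \<le> a div b * b" by (intro mult_le_mono1) simp
  also have "\<dots> \<le> a" by (rule div_times_less_eq_dividend)
  finally show "\<not> a < Suc y * b" by simp
qed

lemma eval_recf_div: "eval recf_div [a, b] (a div b)"
proof -
  define body where "body = Comp recf_less [Proj 1, Comp recf_mult [Comp Succ [Proj 0], Proj 2]]"
  have "eval body [q, a, b] (if a < Suc q * b then 1 else 0)" for q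
    unfolding body_def
    by (intro eval_Comp2[OF _ _ eval_recf_less] eval_Comp2[OF _ _ eval_recf_mult]
        eval_Comp1[OF _ eval_Succ]) (auto intro: eval_ProjI)
  moreover have "(\<lambda>q. (if a < Suc q * b then 1 else 0 :: nat) \<noteq> 0) = (\<lambda>q. a < Suc q * b)"
    by auto
  ultimately have bmin:
      "eval (recf_bmin 2 body) [Suc a, a, b] (bounded_min (Suc a) (\<lambda>q. a < Suc q * b))"
    using eval_recf_bmin[of "[a, b]" 2 body "\<lambda>q. if a < Suc q * b then 1 else 0" "Suc a"]
    by (simp only: length_Cons list.size numeral_2_eq_2 add_0 Suc_eq_plus1[symmetric])
  have search: "eval (Comp (recf_bmin 2 body) [Comp Succ [Proj 0], Proj 0, Proj 1]) [a, b]
      (bounded_min (Suc a) (\<lambda>q. a < Suc q * b))"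
    by (rule eval_Comp3[OF eval_Comp1[OF eval_ProjI eval_Succ] _ _ bmin]) (auto intro: eval_ProjI)
  have select: "eval recf_if [b, bounded_min (Suc a) (\<lambda>q. a < Suc q * b), 0] (a div b)"
    using bounded_min_div[of b a] by (intro eval_recf_ifI) (simp del: bounded_min.simps)
  show ?thesis
    unfolding recf_div_def body_def[symmetric]
    by (rule eval_Comp3[OF eval_ProjI search eval_Zero select]) simp_all
qed

datatype tm =
    Var nat | Num nat | Plus tm tm | Minus tm tm | Times tm tm | Power tm tm | Div tm tm
  | Less tm tm | Cond tm tm tm | BMin nat tm tm

primrec tval :: "tm \<Rightarrow> (nat \<Rightarrow> nat) \<Rightarrow> nat" where
  "tval (Var v) s = s v"
| "tval (Num n) s = n"
| "tval (Plus a b) s = tval a s + tval b s"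
| "tval (Minus a b) s = tval a s - tval b s"
| "tval (Times a b) s = tval a s * tval b s"
| "tval (Power a b) s = tval a s ^ tval b s"
| "tval (Div a b) s = tval a s div tval b s"
| "tval (Less a b) s = (if tval a s < tval b s then 1 else 0)"
| "tval (Cond c a b) s = (if tval c s \<noteq> 0 then tval a s else tval b s)"
| "tval (BMin v t b) s = bounded_min (tval t s) (\<lambda>y. tval b (s(v := y)) \<noteq> 0)"

primrec tvars :: "tm \<Rightarrow> nat set" where
  "tvars (Var v) = {v}"
| "tvars (Num n) = {}"
| "tvars (Plus a b) = tvars a \<union> tvars b"
| "tvars (Minus a b) = tvars a \<union> tvars b"
| "tvars (Times a b) = tvars a \<union> tvars b"
| "tvars (Power a b) = tvars a \<union> tvars b"
| "tvars (Div a b) = tvars a \<union> tvars b"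
| "tvars (Less a b) = tvars a \<union> tvars b"
| "tvars (Cond c a b) = tvars c \<union> tvars a \<union> tvars b"
| "tvars (BMin v t b) = tvars t \<union> (tvars b - {v})"

lemma tval_cong: "(\<And>v. v \<in> tvars t \<Longrightarrow> s v = s' v) \<Longrightarrow> tval t s = tval t s'"
proof (induction t arbitrary: s s')
  case (BMin v t b)
  have "tval b (s(v := y)) = tval b (s'(v := y))" for y
    by (rule BMin.IH(2)) (use BMin.prems in auto)
  moreover have "tval t s = tval t s'" by (rule BMin.IH(1)) (use BMin.prems in auto)
  ultimately show ?case by simp
next
  case (Plus a b) show ?case using Plus.IH[of s s'] Plus.prems by simp
next
  case (Minus a b) show ?case using Minus.IH[of s s'] Minus.prems by simp
next
  case (Times a b) show ?case using Times.IH[of s s'] Times.prems by simp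
next
  case (Power a b) show ?case using Power.IH[of s s'] Power.prems by simp
next
  case (Div a b) show ?case using Div.IH[of s s'] Div.prems by simp
next
  case (Less a b) show ?case using Less.IH[of s s'] Less.prems by simp
next
  case (Cond c a b) show ?case using Cond.IH[of s s'] Cond.prems by simp
qed simp_all

lemma tval_fun_upd [simp]: "v \<notin> tvars t \<Longrightarrow> tval t (s(v := y)) = tval t s"
  by (rule tval_cong) auto

text \<open>A term is compiled relative to a list of variables naming the arguments; a variable is
  read off at its first occurrence, so the variable bound by \<open>BMin\<close> shadows outer ones.\<close>

primrec var_pos :: "nat list \<Rightarrow> nat \<Rightarrow> nat" where
  "var_pos [] w = 0"
| "var_pos (v # vs) w = (if v = w then 0 else Suc (var_pos vs w))"

lemma var_pos_less: "w \<in> set vs \<Longrightarrow> var_pos vs w < length vs"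
  by (induction vs) auto

primrec compile :: "nat list \<Rightarrow> tm \<Rightarrow> recf" where
  "compile vs (Var v) = Proj (var_pos vs v)"
| "compile vs (Num n) = recf_const n"
| "compile vs (Plus a b) = Comp recf_add [compile vs a, compile vs b]"
| "compile vs (Minus a b) = Comp recf_monus [compile vs b, compile vs a]"
| "compile vs (Times a b) = Comp recf_mult [compile vs a, compile vs b]"
| "compile vs (Power a b) = Comp recf_power [compile vs b, compile vs a]"
| "compile vs (Div a b) = Comp recf_div [compile vs a, compile vs b]"
| "compile vs (Less a b) = Comp recf_less [compile vs a, compile vs b]"
| "compile vs (Cond c a b) = Comp recf_if [compile vs c, compile vs a, compile vs b]"
| "compile vs (BMin v t b) =
     Comp (recf_bmin (length vs) (compile (v # vs) b)) (compile vs t # map Proj [0..<length vs])"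

lemma eval_compile:
  assumes "tvars t \<subseteq> set vs" and "length xs = length vs"
    and "\<And>w. w \<in> set vs \<Longrightarrow> xs ! var_pos vs w = s w"
  shows "eval (compile vs t) xs (tval t s)"
  using assms
proof (induction t arbitrary: vs xs s)
  case (BMin v t b)
  have "eval (compile (v # vs) b) (y # xs) (tval b (s(v := y)))" for y
    by (rule BMin.IH(2)) (use BMin.prems in auto)
  then have "eval (recf_bmin (length vs) (compile (v # vs) b)) (tval t s # xs) (tval (BMin v t b) s)"
    using eval_recf_bmin BMin.prems(2) by simp
  moreover have "eval (compile vs t) xs (tval t s)" by (rule BMin.IH(1)) (use BMin.prems in auto)
  ultimately show ?case
    using BMin.prems(2) by (auto intro!: eval_Comp[where ys = "tval t s # xs"] eval_ProjI
        simp: nth_Cons' less_Suc_eq_0_disj)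
next
  case (Var v)
  then show ?case by (auto intro!: eval_ProjI simp: var_pos_less)
next
  case (Plus a b)
  show ?case
    unfolding compile.simps tval.simps
    by (rule eval_Comp2[OF _ _ eval_recf_add]) (use Plus.IH[of vs xs s] Plus.prems in auto)
next
  case (Minus a b)
  show ?case
    unfolding compile.simps tval.simps
    by (rule eval_Comp2[OF _ _ eval_recf_monus]) (use Minus.IH[of vs xs s] Minus.prems in auto)
next
  case (Times a b)
  show ?case
    unfolding compile.simps tval.simps
    by (rule eval_Comp2[OF _ _ eval_recf_mult]) (use Times.IH[of vs xs s] Times.prems in auto)
next
  case (Power a b)
  show ?case
    unfolding compile.simps tval.simps
    by (rule eval_Comp2[OF _ _ eval_recf_power]) (use Power.IH[of vs xs s] Power.prems in auto)
next
  case (Div a b)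
  show ?case
    unfolding compile.simps tval.simps
    by (rule eval_Comp2[OF _ _ eval_recf_div]) (use Div.IH[of vs xs s] Div.prems in auto)
next
  case (Less a b)
  show ?case
    unfolding compile.simps tval.simps
    by (rule eval_Comp2[OF _ _ eval_recf_less]) (use Less.IH[of vs xs s] Less.prems in auto)
next
  case (Cond c a b)
  show ?case
    unfolding compile.simps tval.simps
    by (rule eval_Comp3[OF _ _ _ eval_recf_ifI]) (use Cond.IH[of vs xs s] Cond.prems in auto)
qed (simp add: eval_recf_const)

definition holds :: "tm \<Rightarrow> (nat \<Rightarrow> nat) \<Rightarrow> bool" where
  "holds t s \<longleftrightarrow> tval t s \<noteq> 0"

definition "tm_not a = Cond a (Num 0) (Num 1)"
definition "tm_and a b = Cond a b (Num 0)"
definition "tm_or a b = Cond a (Num 1) b"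
definition "tm_imp a b = Cond a b (Num 1)"
definition "tm_iff a b = Cond a b (tm_not b)"
definition "tm_le a b = tm_not (Less b a)"
definition "tm_eq a b = tm_and (tm_le a b) (tm_le b a)"
definition "tm_ex v t b = Less (BMin v t b) t"
definition "tm_all v t b = tm_not (tm_ex v t (tm_not b))"

lemma tvars_connectives [simp]:
  "tvars (tm_not a) = tvars a" "tvars (tm_and a b) = tvars a \<union> tvars b"
  "tvars (tm_or a b) = tvars a \<union> tvars b" "tvars (tm_imp a b) = tvars a \<union> tvars b"
  "tvars (tm_iff a b) = tvars a \<union> tvars b" "tvars (tm_le a b) = tvars a \<union> tvars b"
  "tvars (tm_eq a b) = tvars a \<union> tvars b"
  "tvars (tm_ex v t b) = tvars t \<union> (tvars b - {v})" "tvars (tm_all v t b) = tvars t \<union> (tvars b - {v})"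
  by (auto simp: tm_not_def tm_and_def tm_or_def tm_imp_def tm_iff_def tm_le_def tm_eq_def
      tm_ex_def tm_all_def)

lemma holds_connectives [simp]:
  "holds (Var v) s \<longleftrightarrow> s v \<noteq> 0"
  "holds (Num n) s \<longleftrightarrow> n \<noteq> 0"
  "holds (Less a b) s \<longleftrightarrow> tval a s < tval b s"
  "holds (Cond c a b) s \<longleftrightarrow> (if holds c s then holds a s else holds b s)"
  "holds (tm_not a) s \<longleftrightarrow> \<not> holds a s"
  "holds (tm_and a b) s \<longleftrightarrow> holds a s \<and> holds b s"
  "holds (tm_or a b) s \<longleftrightarrow> holds a s \<or> holds b s"
  "holds (tm_imp a b) s \<longleftrightarrow> (holds a s \<longrightarrow> holds b s)"
  "holds (tm_iff a b) s \<longleftrightarrow> (holds a s \<longleftrightarrow> holds b s)"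
  "holds (tm_le a b) s \<longleftrightarrow> tval a s \<le> tval b s"
  "holds (tm_eq a b) s \<longleftrightarrow> tval a s = tval b s"
  by (auto simp: holds_def tm_not_def tm_and_def tm_or_def tm_imp_def tm_iff_def tm_le_def tm_eq_def)

lemma holds_tm_ex [simp]: "holds (tm_ex v t b) s \<longleftrightarrow> (\<exists>y<tval t s. holds b (s(v := y)))"
  by (simp add: tm_ex_def holds_def bounded_min_less_iff)

lemma holds_tm_all [simp]: "holds (tm_all v t b) s \<longleftrightarrow> (\<forall>y<tval t s. holds b (s(v := y)))"
  by (simp add: tm_all_def)

definition "tm_digit base c i =
  Minus (Div c (Power base i)) (Times base (Div (Div c (Power base i)) base))"

lemma tvars_tm_digit [simp]: "tvars (tm_digit base c i) = tvars base \<union> tvars c \<union> tvars i"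
  by (auto simp: tm_digit_def)

lemma tval_tm_digit [simp]: "tval (tm_digit base c i) s = digit (tval base s) (tval c s) (tval i s)"
  by (simp add: tm_digit_def digit_def minus_mult_div_eq_mod)

text \<open>The components of a Cantor pair \<open>z\<close> are at most \<open>z\<close>, and
  \<open>prod_encode (a, b) = z\<close> is the polynomial identity \<open>2 z = (a + b) (a + b + 1) + 2 a\<close>.\<close>

definition "tm_unpair v1 v2 z body =
  tm_ex v1 (Plus z (Num 1)) (tm_ex v2 (Plus z (Num 1)) (tm_and
    (tm_eq (Times (Num 2) z)
       (Plus (Times (Plus (Var v1) (Var v2)) (Plus (Plus (Var v1) (Var v2)) (Num 1)))
         (Times (Num 2) (Var v1))))
    body))"

lemma tvars_tm_unpair [simp]: "tvars (tm_unpair v1 v2 z body) = tvars z \<union> (tvars body - {v1, v2})"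
  by (auto simp: tm_unpair_def)

lemma prod_encode_iff: "prod_encode (a, b) = z \<longleftrightarrow> 2 * z = (a + b) * (a + b + 1) + 2 * a"
proof -
  have "2 * triangle n = n * (n + 1)" for n
    by (induction n) (auto simp: algebra_simps)
  then have "2 * prod_encode (a, b) = (a + b) * (a + b + 1) + 2 * a"
    by (simp add: prod_encode_def)
  then show ?thesis by linarith
qed

lemma holds_tm_unpair [simp]:
  assumes "v1 \<noteq> v2" and "v1 \<notin> tvars z" and "v2 \<notin> tvars z"
  shows "holds (tm_unpair v1 v2 z body) s \<longleftrightarrow>
    holds body (s(v1 := fst (prod_decode (tval z s)), v2 := snd (prod_decode (tval z s))))"
proof -
  obtain a b where ab: "prod_decode (tval z s) = (a, b)" by fastforce
  then have z: "prod_encode (a, b) = tval z s" by (metis prod_decode_inverse)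
  have "holds (tm_unpair v1 v2 z body) s \<longleftrightarrow>
      (\<exists>a'\<le>tval z s. \<exists>b'\<le>tval z s.
        prod_encode (a', b') = tval z s \<and> holds body (s(v1 := a', v2 := b')))"
    unfolding tm_unpair_def prod_encode_iff using assms by (simp add: less_Suc_eq_le)
  also have "\<dots> \<longleftrightarrow> holds body (s(v1 := a, v2 := b))"
    using z le_prod_encode_1[of a b] le_prod_encode_2[of b a] by (metis prod_encode_eq prod.inject)
  finally show ?thesis using ab by simp
qed

section \<open>The certificate search as an arithmetic term\<close>

text \<open>Variables: 0 formula code, 1 trace length, 2 position, 3 and 4 atom tables,
  5 timestamps, 6 labelling, 7 to 9 an entry of the labelling, 10 to 17 the decoded formula code,
  18 and 19 positions quantified over in temporal steps.\<close>

definition "tm_time pt = tm_digit (Plus (Times (Var 1) (Plus (Var 0) (Num 1))) (Num 1)) (Var 5) pt"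

definition "tm_label zt pt Xt =
  tm_eq (tm_digit (Num 2) (Var 6) (Plus (Times (Plus (Times zt (Var 1)) pt) (Num 2)) Xt)) (Num 1)"

definition "tm_gap_in_int b a =
  (tm_and (tm_le (Var 14) (Minus (tm_time b) (tm_time a)))
    (tm_or (tm_eq (Var 15) (Num 0)) (Less (Plus (Minus (tm_time b) (tm_time a)) (Num 1)) (Var 15))))"

definition "tm_step =
  Cond (tm_eq (Var 10) (Num 0))
    (tm_eq (tm_digit (Num 2) (Cond (Var 9) (Var 4) (Var 3))
      (Plus (Times (Var 8) (Plus (Var 0) (Num 1))) (Var 11))) (Num 1))
  (Cond (tm_eq (Var 10) (Num 2))
    (tm_and (tm_label (Var 12) (Var 8) (Var 9)) (tm_label (Var 13) (Var 8) (Var 9)))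
  (Cond (tm_eq (Var 10) (Num 3))
    (tm_or (tm_label (Var 12) (Var 8) (Var 9)) (tm_label (Var 13) (Var 8) (Var 9)))
  (Cond (tm_eq (Var 10) (Num 4))
    (tm_and (tm_imp (tm_label (Var 12) (Var 8) (Var 9)) (tm_label (Var 13) (Var 8) (Var 9)))
      (tm_imp (tm_label (Var 12) (Var 8) (Num 1)) (tm_label (Var 13) (Var 8) (Num 1))))
  (Cond (tm_eq (Var 10) (Num 5))
    (tm_and (Less (Num 0) (Var 8)) (tm_and (tm_label (Var 13) (Minus (Var 8) (Num 1)) (Var 9))
      (tm_gap_in_int (Var 8) (Minus (Var 8) (Num 1)))))
  (Cond (tm_eq (Var 10) (Num 6))
    (tm_ex 18 (Plus (Var 8) (Num 1)) (tm_and (tm_gap_in_int (Var 8) (Var 18))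
      (tm_and (tm_label (Var 17) (Var 18) (Var 9))
        (tm_all 19 (Plus (Var 8) (Num 1))
          (tm_imp (Less (Var 18) (Var 19)) (tm_label (Var 16) (Var 19) (Var 9)))))))
  (Cond (tm_eq (Var 10) (Num 7))
    (tm_all 18 (Plus (Var 8) (Num 1)) (tm_imp (tm_gap_in_int (Var 8) (Var 18))
      (tm_or (tm_label (Var 17) (Var 18) (Var 9))
        (tm_ex 19 (Plus (Var 8) (Num 1))
          (tm_and (Less (Var 18) (Var 19)) (tm_label (Var 16) (Var 19) (Var 9)))))))
  (Cond (tm_eq (Var 10) (Num 8))
    (tm_and (Less (Plus (Var 8) (Num 1)) (Var 1))
      (tm_and (tm_label (Var 13) (Plus (Var 8) (Num 1)) (Var 9))
        (tm_gap_in_int (Plus (Var 8) (Num 1)) (Var 8))))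
  (Cond (tm_eq (Var 10) (Num 9))
    (tm_ex 18 (Var 1) (tm_and (tm_le (Var 8) (Var 18)) (tm_and (tm_gap_in_int (Var 18) (Var 8))
      (tm_and (tm_label (Var 17) (Var 18) (Var 9))
        (tm_all 19 (Var 18) (tm_imp (tm_le (Var 8) (Var 19)) (tm_label (Var 16) (Var 19) (Var 9))))))))
  (Cond (tm_eq (Var 10) (Num 10))
    (tm_all 18 (Var 1) (tm_imp (tm_and (tm_le (Var 8) (Var 18)) (tm_gap_in_int (Var 18) (Var 8)))
      (tm_or (tm_label (Var 17) (Var 18) (Var 9))
        (tm_ex 19 (Var 18) (tm_and (tm_le (Var 8) (Var 19)) (tm_label (Var 16) (Var 19) (Var 9)))))))
  (Num 0))))))))))"

lemma tvars_tm_step: "tvars tm_step \<subseteq> {0, 1, 3, 4, 5, 6, 8, 9, 10, 11, 12, 13, 14, 15, 16, 17}"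
  unfolding tm_step_def tm_label_def tm_gap_in_int_def tm_time_def by auto

lemma holds_tm_step:
  assumes "prod_decode (s 7) = (s 10, s 11)" and "prod_decode (s 11) = (s 12, s 13)"
    and "prod_decode (s 12) = (s 14, s 15)" and "prod_decode (s 13) = (s 16, s 17)"
  shows "holds tm_step s \<longleftrightarrow> label_step (label_table (s 1) (s 6)) (atom_table (s 0) (s 3) (s 4))
    (time_table (s 0) (s 1) (s 5)) (s 1) (s 7) (s 8) (s 9)"
  unfolding label_step_def assms prod.case Let_def
  by (simp add: tm_step_def tm_label_def tm_gap_in_int_def tm_time_def label_table_def atom_table_def
      time_table_def less_Suc_eq_le)

definition "tm_label_table_ok =
  tm_all 7 (Plus (Var 0) (Num 1)) (tm_all 8 (Var 1) (tm_all 9 (Num 2)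
    (tm_unpair 10 11 (Var 7) (tm_unpair 12 13 (Var 11)
      (tm_unpair 14 15 (Var 12) (tm_unpair 16 17 (Var 13)
      (tm_iff (tm_label (Var 7) (Var 8) (Var 9)) tm_step)))))))"

lemma holds_tm_label_table_ok:
  "holds tm_label_table_ok s \<longleftrightarrow> label_table_ok (s 0) (s 1) (s 3) (s 4) (s 5) (s 6)"
  using tvars_tm_step
  by (auto simp: tm_label_table_ok_def label_table_ok_def tm_label_def label_table_def
      holds_tm_step)

definition "tm_trace_table_ok =
  tm_and (tm_eq (tm_time (Num 0)) (Num 0))
  (tm_and (tm_all 8 (Var 1) (tm_imp (Less (Plus (Var 8) (Num 1)) (Var 1))
      (tm_le (tm_time (Var 8)) (tm_time (Plus (Var 8) (Num 1))))))
    (tm_all 8 (Var 1) (tm_all 12 (Plus (Var 0) (Num 1))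
      (tm_le (tm_digit (Num 2) (Var 3) (Plus (Times (Var 8) (Plus (Var 0) (Num 1))) (Var 12)))
             (tm_digit (Num 2) (Var 4) (Plus (Times (Var 8) (Plus (Var 0) (Num 1))) (Var 12)))))))"

lemma holds_tm_trace_table_ok:
  "holds tm_trace_table_ok s \<longleftrightarrow> trace_table_ok (s 0) (s 1) (s 3) (s 4) (s 5)"
  by (simp add: tm_trace_table_ok_def trace_table_ok_def tm_time_def time_table_def)

definition "tm_certificate fin =
  tm_ex 1 (Plus (Times (Num 2)
      (Power (Num 2) (Times (Times (Num 2) (Plus (Var 0) (Num 1))) (Plus (Var 0) (Num 1))))) (Num 1))
  (tm_ex 2 (Var 1)
  (tm_ex 3 (Power (Num 2) (Times (Var 1) (Plus (Var 0) (Num 1))))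
  (tm_ex 4 (Power (Num 2) (Times (Var 1) (Plus (Var 0) (Num 1))))
  (tm_ex 5 (Power (Plus (Times (Var 1) (Plus (Var 0) (Num 1))) (Num 1)) (Var 1))
  (tm_ex 6 (Power (Num 2) (Times (Times (Plus (Var 0) (Num 1)) (Var 1)) (Num 2)))
    (tm_and tm_trace_table_ok (tm_and tm_label_table_ok fin)))))))"

lemma holds_tm_certificate:
  assumes "\<And>t. holds fin t \<longleftrightarrow> F (t 0) (t 1) (t 2) (t 6)"
  shows "holds (tm_certificate fin) s \<longleftrightarrow> has_certificate (F (s 0)) (s 0)"
  by (simp add: tm_certificate_def has_certificate_def type_bound_def assms
      holds_tm_trace_table_ok holds_tm_label_table_ok)

lemma tvars_tm_certificate: "tvars fin \<subseteq> {0, 1, 2, 6} \<Longrightarrow> tvars (tm_certificate fin) \<subseteq> {0}"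
  using tvars_tm_step
  unfolding tm_certificate_def tm_trace_table_ok_def tm_label_table_ok_def tm_label_def tm_time_def
  by auto

lemma decidable_mformI:
  assumes "tvars t \<subseteq> {0}" and "\<And>\<phi>. holds t (\<lambda>_. enc \<phi>) \<longleftrightarrow> P \<phi>"
  shows "decidable_mform P"
  unfolding decidable_mform_def
proof (intro exI allI)
  fix \<phi>
  have "tval (Cond t (Num 1) (Num 0)) (\<lambda>_. enc \<phi>) = (if P \<phi> then 1 else 0)"
    using assms(2)[of \<phi>] by (simp add: holds_def)
  moreover have
    "eval (compile [0] (Cond t (Num 1) (Num 0))) [enc \<phi>] (tval (Cond t (Num 1) (Num 0)) (\<lambda>_. enc \<phi>))"
    by (rule eval_compile) (use assms(1) in auto)
  ultimately show "eval (compile [0] (Cond t (Num 1) (Num 0))) [enc \<phi>] (if P \<phi> then 1 else 0)"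
    by simp
qed

theorem corollary1:
  shows "decidable_mform MHTf_tautology \<and> decidable_mform MHTf_satisfiable"
proof
  let ?refutation = "tm_not (tm_label (Var 0) (Var 2) (Num 0))"
  show "decidable_mform MHTf_tautology"
  proof (rule decidable_mformI[of "tm_not (tm_certificate ?refutation)"])
    show "tvars (tm_not (tm_certificate ?refutation)) \<subseteq> {0}"
      by (simp add: tvars_tm_certificate tm_label_def)
    have "holds (tm_certificate ?refutation) s \<longleftrightarrow>
        has_certificate (\<lambda>lam k Lc. \<not> label_table lam Lc (s 0) k 0) (s 0)" for s
      by (rule holds_tm_certificate) (simp add: tm_label_def label_table_def)
    then show "holds (tm_not (tm_certificate ?refutation)) (\<lambda>_. enc \<phi>) \<longleftrightarrow> MHTf_tautology \<phi>" for \<phi>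
      by (simp add: MHTf_tautology_iff_no_certificate)
  qed
next
  let ?model = "tm_and (tm_eq (Var 2) (Num 0)) (tm_label (Var 0) (Var 2) (Num 0))"
  show "decidable_mform MHTf_satisfiable"
  proof (rule decidable_mformI[of "tm_certificate ?model"])
    show "tvars (tm_certificate ?model) \<subseteq> {0}"
      by (simp add: tvars_tm_certificate tm_label_def)
    have "holds (tm_certificate ?model) s \<longleftrightarrow>
        has_certificate (\<lambda>lam k Lc. k = 0 \<and> label_table lam Lc (s 0) k 0) (s 0)" for s
      by (rule holds_tm_certificate) (simp add: tm_label_def label_table_def)
    then show "holds (tm_certificate ?model) (\<lambda>_. enc \<phi>) \<longleftrightarrow> MHTf_satisfiable \<phi>" for \<phi>
      by (simp add: MHTf_satisfiable_iff_certificate)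
  qed
qed

end
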